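(* Let $m=rn$ with $r$ an integer satisfying $2\leq r\leq e^{n^{0.1}}$ ($r$ may depend on $n$). Let the utilities $u_i(j)$ ($i\in[n]$, $j\in[m]$) be drawn independently from a distribution $\mathcal{U}$ on $[0,1]$ that is $(\underline{\theta},q)$-polynomially bounded below at 1 and $(\overline{\theta},q)$-polynomially bounded above at 1, for constants $\underline{\theta},\overline{\theta},q>0$, and let $\tau:=1-\left(\frac{64\log m}{\underline{\theta}n}\right)^{1/q}$. Let $E_{\geq\tau}=\{(i,j)\in N\times M: u_i(j)\geq\tau\}$ and let $E^*_{\geq\tau}$ be the edge set produced by ThresholdMatchingWithRemoval$_\tau$ (see context). Then, with high probability, the bipartite graph $(N,M,E_{\geq\tau}\setminus E^*_{\geq\tau})$ has maximum degree at most 2.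
   Context: Agents are $N=[n]$, items $M=[m]$. A distribution $\mathcal{U}$ on $[0,1]$ is $(\theta,q)$-polynomially bounded below (resp. above) at 1 if for all $\alpha\in(0,1]$, $\Pr_{u\sim\mathcal{U}}[u>1-\alpha]\geq\theta\alpha^q$ (resp. $\leq\theta\alpha^q$). For a finite multiset $S$ of reals, sum-top$_r(S)$ is the sum of its $r$ largest elements (or of all elements if $|S|<r$). Procedure ThresholdMatchingWithRemoval$_\tau$: for each agent $i=1,\dots,n$, set $M^*_{\geq\tau}(i)\leftarrow\{j\in M: u_i(j)\geq\tau\}$; then for each $i'\in N\setminus\{i\}$ in turn, while sum-top$_r(\{u_{i'}(j): j\in M^*_{\geq\tau}(i)\})>r\tau$ (as a multiset), remove from $M^*_{\geq\tau}(i)$ the item(s) $j\in M^*_{\geq\tau}(i)$ maximizing $u_{i'}(j)$. Then $E^*_{\geq\tau}=\{(i,j): j\in M^*_{\geq\tau}(i)\text{ at the end}\}$. $\log$ is natural. "With high probability" means with probability tending to 1 as $n\to\infty$. *)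

theory Defs
  imports "HOL-Probability.Probability"
begin

text \<open>Agents are 0..<n, items 0..<m. A utility profile is u :: nat \<Rightarrow> nat \<Rightarrow> real,
  u i j = utility of agent i for item j.\<close>

definition poly_bounded_below :: "real measure \<Rightarrow> real \<Rightarrow> real \<Rightarrow> bool" where
  "poly_bounded_below U \<theta> q \<longleftrightarrow>
     (\<forall>\<alpha>. 0 < \<alpha> \<and> \<alpha> \<le> 1 \<longrightarrow> measure U {1 - \<alpha><..} \<ge> \<theta> * \<alpha> powr q)"

definition poly_bounded_above :: "real measure \<Rightarrow> real \<Rightarrow> real \<Rightarrow> bool" where
  "poly_bounded_above U \<theta> q \<longleftrightarrow>
     (\<forall>\<alpha>. 0 < \<alpha> \<and> \<alpha> \<le> 1 \<longrightarrow> measure U {1 - \<alpha><..} \<le> \<theta> * \<alpha> powr q)"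

definition sum_top :: "nat \<Rightarrow> (nat \<Rightarrow> real) \<Rightarrow> nat set \<Rightarrow> real" where
  "sum_top r f S = sum_list (take r (rev (sort (map f (sorted_list_of_set S)))))"

definition removal_step :: "nat \<Rightarrow> real \<Rightarrow> (nat \<Rightarrow> real) \<Rightarrow> nat set \<Rightarrow> nat set" where
  "removal_step r \<tau> f S =
     (if S \<noteq> {} \<and> sum_top r f S > real r * \<tau>
      then S - {j \<in> S. f j = Max (f ` S)} else S)"

text \<open>The while loop; each effective step removes at least one item, so after card S
  iterations the loop has terminated.\<close>
definition removal_loop :: "nat \<Rightarrow> real \<Rightarrow> (nat \<Rightarrow> real) \<Rightarrow> nat set \<Rightarrow> nat set" where
  "removal_loop r \<tau> f S = (removal_step r \<tau> f ^^ card S) S"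

definition M_star :: "nat \<Rightarrow> nat \<Rightarrow> nat \<Rightarrow> real \<Rightarrow> (nat \<Rightarrow> nat \<Rightarrow> real) \<Rightarrow> nat \<Rightarrow> nat set" where
  "M_star n m r \<tau> u i =
     foldl (\<lambda>S i'. removal_loop r \<tau> (u i') S)
           {j. j < m \<and> u i j \<ge> \<tau>}
           (filter (\<lambda>i'. i' \<noteq> i) [0..<n])"

definition E_ge :: "nat \<Rightarrow> nat \<Rightarrow> real \<Rightarrow> (nat \<Rightarrow> nat \<Rightarrow> real) \<Rightarrow> (nat \<times> nat) set" where
  "E_ge n m \<tau> u = {(i, j). i < n \<and> j < m \<and> u i j \<ge> \<tau>}"

definition E_star :: "nat \<Rightarrow> nat \<Rightarrow> nat \<Rightarrow> real \<Rightarrow> (nat \<Rightarrow> nat \<Rightarrow> real) \<Rightarrow> (nat \<times> nat) set" where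
  "E_star n m r \<tau> u = {(i, j). i < n \<and> j \<in> M_star n m r \<tau> u i}"

definition max_degree_le :: "nat \<Rightarrow> nat \<Rightarrow> (nat \<times> nat) set \<Rightarrow> nat \<Rightarrow> bool" where
  "max_degree_le n m D k \<longleftrightarrow>
     (\<forall>i<n. card {j. j < m \<and> (i, j) \<in> D} \<le> k) \<and>
     (\<forall>j<m. card {i. i < n \<and> (i, j) \<in> D} \<le> k)"

end

theory Submission
  imports Defs "HOL-Real_Asymp.Real_Asymp"
begin

text \<open>
  Write \<open>\<alpha> = (64 log m / (\<theta> n)) powr (1/q)\<close>, so that \<open>\<tau> = 1 - \<alpha>\<close>, and call a utility
  high if it exceeds \<open>1 - 2\<alpha>\<close>. If agent \<open>p\<close> removes item \<open>j\<close> from the current set \<open>S\<close> of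
  agent \<open>i\<close>, then the top-\<open>r\<close> sum of \<open>p\<close>'s utilities on \<open>S\<close> exceeds \<open>r(1 - \<alpha>)\<close>; since
  utilities are at most 1, \<open>p\<close> values \<open>j\<close> and at least two items of \<open>S\<close> highly (at least
  \<open>max 3 (r div 4 + 1)\<close> of them when \<open>r \<ge> 4\<close>), and \<open>i\<close> values every item of \<open>S\<close> at least
  \<open>1 - \<alpha>\<close>. So each removed edge \<open>(i, j)\<close> has a partner \<open>p\<close> sharing a large set of high
  items with \<open>i\<close>, among them \<open>j\<close>. For \<open>r \<ge> 4\<close> such pairs are unlikely, so nothing is
  removed at all; for \<open>r \<le> 3\<close> a vertex of degree three in the removed graph forces one of five
  small configurations of high utilities with more cells than agents plus items. A utility is
  high with probability \<open>O(log m / n)\<close>, so by union bounds every bad event has probability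
  \<open>O(polylog n / n)\<close>.
\<close>

section \<open>The removal procedure\<close>

lemma card_ge_2_obtain:
  assumes "2 \<le> card A"
  obtains a b where "a \<in> A" "b \<in> A" "a \<noteq> b"
proof -
  obtain B where "B \<subseteq> A" "card B = 2"
    using obtain_subset_with_card_n[OF assms] by blast
  then show ?thesis using that by (auto simp: card_2_iff)
qed

lemma card_ge_3_obtain:
  assumes "3 \<le> card A"
  obtains a b c where "a \<in> A" "b \<in> A" "c \<in> A" "distinct [a, b, c]"
proof -
  obtain B where "B \<subseteq> A" "card B = 3"
    using obtain_subset_with_card_n[OF assms] by blast
  then show ?thesis using that by (auto simp: card_3_iff)
qed

definition overlap_bound :: "nat \<Rightarrow> nat" where
  "overlap_bound r = max 3 (r div 4 + 1)"

lemma sum_list_le_count_gt: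
  fixes ys :: "real list"
  assumes "\<forall>y\<in>set ys. y \<le> 1"
  shows "sum_list ys \<le> real (length (filter (\<lambda>y. h < y) ys)) + h * real (length (filter (\<lambda>y. \<not> h < y) ys))"
  using assms by (induction ys) (auto simp: algebra_simps)

lemma sum_top_eq_sum_list:
  assumes "finite S"
  obtains ys where "sum_top r f S = sum_list ys" "length ys \<le> r" "set ys \<subseteq> f ` S"
    "\<And>P. length (filter P ys) \<le> card {j\<in>S. P (f j)}"
proof
  define xs where "xs = sorted_list_of_set S"
  define L where "L = rev (sort (map f xs))"
  show "sum_top r f S = sum_list (take r L)" by (simp add: sum_top_def L_def xs_def)
  show "length (take r L) \<le> r" by simp
  show "set (take r L) \<subseteq> f ` S"
    using assms by (auto simp: L_def xs_def dest: in_set_takeD)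
  fix P
  have "length (filter P (take r L)) \<le> length (filter P L)"
    by (metis append_take_drop_id filter_append length_append le_add1)
  also have "\<dots> = length (filter P (map f xs))"
    by (metis L_def mset_filter mset_rev mset_sort size_mset)
  also have "\<dots> = card {j\<in>S. P (f j)}"
    using assms by (simp add: xs_def filter_map o_def flip: distinct_card[OF distinct_filter[OF distinct_sorted_list_of_set]])
  finally show "length (filter P (take r L)) \<le> card {j\<in>S. P (f j)}" .
qed

lemma sum_top_gt_imp_Max_gt:
  assumes "finite S" "0 \<le> t" "real r * t < sum_top r f S"
  shows "t < Max (f ` S)"
proof (rule ccontr)
  assume "\<not> t < Max (f ` S)"
  obtain ys where ys: "sum_top r f S = sum_list ys" "length ys \<le> r" "set ys \<subseteq> f ` S"
    by (rule sum_top_eq_sum_list[OF assms(1), of r f]) (rule that; assumption)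
  have "y \<le> t" if "y \<in> set ys" for y
  proof -
    have "y \<le> Max (f ` S)" using that ys(3) assms(1) by (auto intro: Max_ge)
    then show ?thesis using \<open>\<not> t < Max (f ` S)\<close> by linarith
  qed
  then have "sum_list ys \<le> real (length ys) * t"
    using sum_list_mono[of ys "\<lambda>y. y" "\<lambda>_. t"] by (simp add: sum_list_triv)
  also have "\<dots> \<le> real r * t"
    using ys(2) assms(2) by (simp add: mult_right_mono)
  finally show False using assms(3) ys(1) by simp
qed

text \<open>Here \<open>b\<close> and \<open>c\<close> count the top-\<open>r\<close> summands above and below \<open>1 - 2\<alpha>\<close>.\<close>

lemma many_large_summands:
  fixes b c r :: nat and \<alpha> :: real
  assumes "0 < \<alpha>" "\<alpha> \<le> 1/16" "2 \<le> r" "b + c \<le> r"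
    and sum: "real r - real r * \<alpha> < real b + (1 - 2 * \<alpha>) * real c"
  shows "2 \<le> b" and "4 \<le> r \<Longrightarrow> overlap_bound r \<le> b"
proof -
  have "2 * \<alpha> * real c < \<alpha> * real r"
    using sum assms(4) by (simp add: algebra_simps)
  then have c: "2 * c < r"
    using assms(1) by (simp add: mult.assoc)
  have "0 \<le> 2 * \<alpha> * real c" using assms(1) by simp
  then have bc: "real r - real r * \<alpha> < real b + real c"
    using sum by (simp add: algebra_simps)
  have ra: "real r * \<alpha> \<le> real r / 16"
    using mult_left_mono[OF assms(2), of "real r"] by simp
  have "2 \<le> b \<and> (4 \<le> r \<longrightarrow> overlap_bound r \<le> b)"
  proof (cases "r \<le> 15")
    case True
    then have "real r * \<alpha> < 1" using ra by linarith
    then have "r = b + c" using bc assms(4) by linarith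
    then show ?thesis using c assms(3) by (auto simp: overlap_bound_def)
  next
    case False
    then have "7 * r < 16 * b" using bc ra c by linarith
    then show ?thesis using False by (auto simp: overlap_bound_def)
  qed
  then show "2 \<le> b" and "4 \<le> r \<Longrightarrow> overlap_bound r \<le> b" by auto
qed

lemma sum_top_gt_imp_many_high:
  fixes f :: "nat \<Rightarrow> real"
  assumes "finite S" "\<forall>j\<in>S. f j \<le> 1" "0 < \<alpha>" "\<alpha> \<le> 1/16" "2 \<le> r"
    and "real r * (1 - \<alpha>) < sum_top r f S"
  shows "2 \<le> card {j\<in>S. 1 - 2 * \<alpha> < f j}"
    and "4 \<le> r \<Longrightarrow> overlap_bound r \<le> card {j\<in>S. 1 - 2 * \<alpha> < f j}"
proof -
  define h where "h = 1 - 2 * \<alpha>"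
  obtain ys where ys: "sum_top r f S = sum_list ys" "length ys \<le> r" "set ys \<subseteq> f ` S"
    "\<And>P. length (filter P ys) \<le> card {j\<in>S. P (f j)}"
    by (rule sum_top_eq_sum_list[OF assms(1), of r f]) (rule that; assumption)
  define b where "b = length (filter (\<lambda>y. h < y) ys)"
  define c where "c = length (filter (\<lambda>y. \<not> h < y) ys)"
  have "b + c \<le> r"
    using ys(2) sum_length_filter_compl[of "\<lambda>y. h < y" ys] by (simp add: b_def c_def)
  moreover have "real r - real r * \<alpha> < real b + (1 - 2 * \<alpha>) * real c"
  proof -
    have "\<forall>y\<in>set ys. y \<le> 1" using ys(3) assms(2) by auto
    then have "sum_list ys \<le> real b + h * real c"
      unfolding b_def c_def by (rule sum_list_le_count_gt)
    then show ?thesis using assms(6) ys(1) by (simp add: h_def algebra_simps)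
  qed
  moreover have "b \<le> card {j\<in>S. 1 - 2 * \<alpha> < f j}"
    using ys(4) by (simp add: b_def h_def)
  ultimately show "2 \<le> card {j\<in>S. 1 - 2 * \<alpha> < f j}"
    and "4 \<le> r \<Longrightarrow> overlap_bound r \<le> card {j\<in>S. 1 - 2 * \<alpha> < f j}"
    using many_large_summands[OF assms(3-5)] by (meson le_trans)+
qed

lemma funpow_shrinking_subset:
  assumes "\<And>S. f S \<subseteq> S"
  shows "(f ^^ k) S \<subseteq> S"
  by (induction k) (use assms in fastforce)+

lemma funpow_shrinking_removed:
  assumes shrink: "\<And>S. f S \<subseteq> S" and "j \<in> S - (f ^^ k) S"
  shows "\<exists>S'\<subseteq>S. j \<in> S' - f S'"
  using assms(2)
proof (induction k)
  case (Suc k)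
  show ?case
  proof (cases "j \<in> (f ^^ k) S")
    case True
    then show ?thesis using Suc.prems funpow_shrinking_subset[OF shrink, of k S] by auto
  qed (use Suc in auto)
qed simp

lemma foldl_shrinking_removed:
  assumes shrink: "\<And>x S. F x S \<subseteq> S" and "j \<in> S - foldl (\<lambda>S x. F x S) S xs"
  shows "\<exists>x\<in>set xs. \<exists>S'\<subseteq>S. j \<in> S' - F x S'"
  using assms(2)
proof (induction xs arbitrary: S)
  case (Cons x xs)
  show ?case
  proof (cases "j \<in> F x S")
    case True
    with Cons.prems have "j \<in> F x S - foldl (\<lambda>S x. F x S) (F x S) xs" by simp
    then show ?thesis using Cons.IH shrink[of x S] by fastforce
  qed (use Cons.prems in auto)
qed simp

lemma removal_step_subset: "removal_step r \<tau> f S \<subseteq> S"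
  by (auto simp: removal_step_def)

lemma removal_loop_subset: "removal_loop r \<tau> f S \<subseteq> S"
  unfolding removal_loop_def by (rule funpow_shrinking_subset[OF removal_step_subset])

lemma M_star_removed:
  assumes "j \<in> {j. j < m \<and> \<tau> \<le> u i j} - M_star n m r \<tau> u i"
  obtains p S where "p < n" "p \<noteq> i" "S \<subseteq> {j. j < m \<and> \<tau> \<le> u i j}" "j \<in> S"
    "real r * \<tau> < sum_top r (u p) S" "u p j = Max (u p ` S)"
proof -
  let ?A = "{j. j < m \<and> \<tau> \<le> u i j}"
  have "j \<in> ?A - foldl (\<lambda>S p. removal_loop r \<tau> (u p) S) ?A (filter (\<lambda>p. p \<noteq> i) [0..<n])"
    using assms unfolding M_star_def .
  from foldl_shrinking_removed[OF removal_loop_subset this]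
  obtain p S' where p: "p \<in> set (filter (\<lambda>p. p \<noteq> i) [0..<n])"
    and S': "S' \<subseteq> ?A" "j \<in> S' - removal_loop r \<tau> (u p) S'"
    by blast
  from S'(2) have "j \<in> S' - (removal_step r \<tau> (u p) ^^ card S') S'"
    unfolding removal_loop_def .
  from funpow_shrinking_removed[OF removal_step_subset this]
  obtain S where S: "S \<subseteq> S'" "j \<in> S - removal_step r \<tau> (u p) S"
    by blast
  from S(2) have "real r * \<tau> < sum_top r (u p) S" "u p j = Max (u p ` S)"
    by (auto simp: removal_step_def split: if_splits)
  moreover have "p < n" "p \<noteq> i" using p by auto
  ultimately show ?thesis using that[of p S] S S'(1) by blast
qed

abbreviation removed_edges :: "nat \<Rightarrow> nat \<Rightarrow> nat \<Rightarrow> real \<Rightarrow> (nat \<times> nat \<Rightarrow> real) \<Rightarrow> (nat \<times> nat) set" where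
  "removed_edges n m r \<tau> \<omega> \<equiv> E_ge n m \<tau> (\<lambda>i j. \<omega> (i, j)) - E_star n m r \<tau> (\<lambda>i j. \<omega> (i, j))"

definition high_overlap :: "real \<Rightarrow> nat \<Rightarrow> (nat \<times> nat \<Rightarrow> real) \<Rightarrow> nat \<Rightarrow> nat \<Rightarrow> nat set" where
  "high_overlap h m \<omega> x y = {j. j < m \<and> h < \<omega> (x, j) \<and> h < \<omega> (y, j)}"

lemma finite_high_overlap [simp]: "finite (high_overlap h m \<omega> x y)"
  by (simp add: high_overlap_def)

lemma removed_edge_high_overlap:
  fixes \<omega> :: "nat \<times> nat \<Rightarrow> real"
  assumes le1: "\<forall>i<n. \<forall>j<m. \<omega> (i, j) \<le> 1" and \<alpha>: "0 < \<alpha>" "\<alpha> \<le> 1/16" and r: "2 \<le> r"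
    and ij: "(i, j) \<in> removed_edges n m r (1 - \<alpha>) \<omega>"
  obtains p where "p < n" "p \<noteq> i" "j \<in> high_overlap (1 - 2 * \<alpha>) m \<omega> i p"
    "2 \<le> card (high_overlap (1 - 2 * \<alpha>) m \<omega> i p)"
    "4 \<le> r \<Longrightarrow> overlap_bound r \<le> card (high_overlap (1 - 2 * \<alpha>) m \<omega> i p)"
proof -
  let ?u = "\<lambda>i j. \<omega> (i, j)"
  let ?O = "high_overlap (1 - 2 * \<alpha>) m \<omega> i"
  have "j \<in> {j. j < m \<and> 1 - \<alpha> \<le> ?u i j} - M_star n m r (1 - \<alpha>) ?u i"
    using ij by (auto simp: E_ge_def E_star_def)
  then obtain p S where p: "p < n" "p \<noteq> i" and S: "S \<subseteq> {j. j < m \<and> 1 - \<alpha> \<le> ?u i j}" "j \<in> S"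
    and top: "real r * (1 - \<alpha>) < sum_top r (?u p) S" and max: "?u p j = Max (?u p ` S)"
    by (rule M_star_removed[where u = ?u])
  have fin: "finite S" using S(1) by (rule finite_subset) auto
  have "1 - \<alpha> < ?u p j"
    using sum_top_gt_imp_Max_gt[OF fin _ top] max \<alpha> by simp
  then have "j \<in> ?O p" using S \<alpha> by (auto simp: high_overlap_def)
  moreover have "{j\<in>S. 1 - 2 * \<alpha> < ?u p j} \<subseteq> ?O p"
    using S(1) \<alpha> by (auto simp: high_overlap_def)
  then have "card {j\<in>S. 1 - 2 * \<alpha> < ?u p j} \<le> card (?O p)"
    by (simp add: card_mono)
  moreover have "\<forall>j\<in>S. ?u p j \<le> 1" using S(1) le1 p by auto
  note many = sum_top_gt_imp_many_high[OF fin this \<alpha> r top]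
  ultimately show ?thesis
    using that[OF p] many by (meson le_trans)
qed

lemma removed_edge_partner:
  fixes \<omega> :: "nat \<times> nat \<Rightarrow> real"
  assumes le1: "\<forall>i<n. \<forall>j<m. \<omega> (i, j) \<le> 1" and \<alpha>: "0 < \<alpha>" "\<alpha> \<le> 1/16" and r: "2 \<le> r"
    and xj: "(x, j) \<in> removed_edges n m r (1 - \<alpha>) \<omega>"
  obtains p j' where "p < n" "p \<noteq> x" "j' < m" "j' \<noteq> j"
    "1 - 2 * \<alpha> < \<omega> (x, j)" "1 - 2 * \<alpha> < \<omega> (p, j)"
    "1 - 2 * \<alpha> < \<omega> (x, j')" "1 - 2 * \<alpha> < \<omega> (p, j')"
proof -
  obtain p where p: "p < n" "p \<noteq> x" "j \<in> high_overlap (1 - 2 * \<alpha>) m \<omega> x p"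
    "2 \<le> card (high_overlap (1 - 2 * \<alpha>) m \<omega> x p)"
    by (rule removed_edge_high_overlap[OF le1 \<alpha> r xj])
  obtain a b where "a \<in> high_overlap (1 - 2 * \<alpha>) m \<omega> x p" "b \<in> high_overlap (1 - 2 * \<alpha>) m \<omega> x p" "a \<noteq> b"
    using p(4) by (rule card_ge_2_obtain)
  then obtain j' where "j' \<in> high_overlap (1 - 2 * \<alpha>) m \<omega> x p" "j' \<noteq> j"
    by metis
  then show ?thesis
    using that[OF p(1,2)] p(3) by (auto simp: high_overlap_def)
qed


section \<open>Dense configurations of high utilities\<close>

definition pattern_occurs ::
    "nat \<Rightarrow> nat \<Rightarrow> real \<Rightarrow> nat \<Rightarrow> nat \<Rightarrow> (nat \<times> nat) list \<Rightarrow> (nat \<times> nat \<Rightarrow> real) \<Rightarrow> bool" where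
  "pattern_occurs n m h a b P \<omega> \<longleftrightarrow>
     (\<exists>xs js. set xs \<subseteq> {..<n} \<and> distinct xs \<and> length xs = a \<and>
              set js \<subseteq> {..<m} \<and> distinct js \<and> length js = b \<and>
              (\<forall>(k, l)\<in>set P. h < \<omega> (xs ! k, js ! l)))"

text \<open>The configurations forced by a vertex of degree three in the removed graph when \<open>r \<le> 3\<close>;
  each has more cells than agents plus items, which is what makes it unlikely.\<close>

definition dense_patterns :: "(nat \<times> nat \<times> (nat \<times> nat) list) list" where
  "dense_patterns =
     [(3, 2, [(0,0), (1,0), (2,0), (0,1), (1,1), (2,1)]),
      (3, 3, [(0,0), (1,0), (2,0), (0,1), (1,1), (0,2), (2,2)]),
      (3, 4, [(0,0), (1,0), (0,1), (1,1), (0,2), (2,2), (0,3), (2,3)]),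
      (4, 3, [(0,0), (1,0), (2,0), (3,0), (0,1), (1,1), (2,2), (3,2)]),
      (4, 2, [(0,0), (1,0), (2,0), (3,0), (0,1), (1,1), (2,1), (3,1)])]"

definition has_dense_pattern :: "nat \<Rightarrow> nat \<Rightarrow> real \<Rightarrow> (nat \<times> nat \<Rightarrow> real) \<Rightarrow> bool" where
  "has_dense_pattern n m h \<omega> \<longleftrightarrow> (\<exists>(a, b, P)\<in>set dense_patterns. pattern_occurs n m h a b P \<omega>)"

lemma dense_patterns_wf:
  assumes "(a, b, P) \<in> set dense_patterns"
  shows "distinct P \<and> (\<forall>(k, l)\<in>set P. k < a \<and> l < b) \<and> a + b < length P \<and> length P \<le> 8 \<and> b \<le> 4"
proof -
  have "list_all (\<lambda>(a, b, P). distinct P \<and> list_all (\<lambda>(k, l). k < a \<and> l < b) P \<and>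
      a + b < length P \<and> length P \<le> 8 \<and> b \<le> 4) dense_patterns"
    by (simp add: dense_patterns_def)
  then show ?thesis using assms by (fastforce simp: list_all_iff)
qed

lemma has_dense_patternI:
  assumes "i < length dense_patterns"
    and "fst (dense_patterns ! i) = length xs" "fst (snd (dense_patterns ! i)) = length js"
    and "set xs \<subseteq> {..<n}" "distinct xs" "set js \<subseteq> {..<m}" "distinct js"
    and "\<forall>(k, l)\<in>set (snd (snd (dense_patterns ! i))). h < \<omega> (xs ! k, js ! l)"
  shows "has_dense_pattern n m h \<omega>"
proof -
  obtain a b P where abP: "dense_patterns ! i = (a, b, P)"
    by (cases "dense_patterns ! i")
  have "pattern_occurs n m h a b P \<omega>"
    unfolding pattern_occurs_def using assms abP by (intro exI[of _ xs] exI[of _ js]) simp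
  moreover have "(a, b, P) \<in> set dense_patterns"
    using nth_mem[OF assms(1)] abP by simp
  ultimately show ?thesis
    unfolding has_dense_pattern_def by blast
qed

lemma two_high_overlaps_dense:
  assumes xyz: "x < n" "y < n" "z < n" "distinct [x, y, z]"
    and 2: "2 \<le> card (high_overlap h m \<omega> x y)" "2 \<le> card (high_overlap h m \<omega> x z)"
  shows "has_dense_pattern n m h \<omega>"
proof -
  let ?O1 = "high_overlap h m \<omega> x y" and ?O2 = "high_overlap h m \<omega> x z"
  obtain a b where ab: "a \<in> ?O1" "b \<in> ?O1" "a \<noteq> b"
    using 2(1) by (rule card_ge_2_obtain)
  obtain c d where cd: "c \<in> ?O2" "d \<in> ?O2" "c \<noteq> d"
    using 2(2) by (rule card_ge_2_obtain)
  have one_shared: "has_dense_pattern n m h \<omega>"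
    if "e \<in> ?O1" "e \<in> ?O2" "e' \<in> ?O1" "e'' \<in> ?O2" "distinct [e, e', e'']" for e e' e''
    by (rule has_dense_patternI[where i = 1 and xs = "[x, y, z]" and js = "[e, e', e'']"])
      (use xyz that in \<open>auto simp: dense_patterns_def high_overlap_def\<close>)
  consider "{c, d} = {a, b}" | "c \<in> {a, b}" "d \<notin> {a, b}" | "d \<in> {a, b}" "c \<notin> {a, b}"
    | "c \<notin> {a, b}" "d \<notin> {a, b}"
    using ab(3) cd(3) by blast
  then show ?thesis
  proof cases
    case 1
    have "{a, b} \<subseteq> ?O2" using cd unfolding 1[symmetric] by simp
    show ?thesis
      by (rule has_dense_patternI[where i = 0 and xs = "[x, y, z]" and js = "[a, b]"])
        (use xyz ab \<open>{a, b} \<subseteq> ?O2\<close> in \<open>simp_all add: dense_patterns_def high_overlap_def\<close>)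
  next
    case 2
    then consider "c = a" | "c = b" by blast
    then show ?thesis
      by cases (use one_shared[of a b d] one_shared[of b a d] ab cd 2 in simp_all)
  next
    case 3
    then consider "d = a" | "d = b" by blast
    then show ?thesis
      by cases (use one_shared[of a b c] one_shared[of b a c] ab cd 3 in simp_all)
  next
    case 4
    show ?thesis
      by (rule has_dense_patternI[where i = 2 and xs = "[x, y, z]" and js = "[a, b, c, d]"])
        (use xyz ab cd 4 in \<open>simp_all add: dense_patterns_def high_overlap_def\<close>)
  qed
qed

lemma shared_agent_dense:
  assumes agents: "e < n" "t < n" "w < n" "distinct [e, t, w]"
    and items: "j < m" "j1 < m" "j2 < m" "j1 \<noteq> j" "j2 \<noteq> j"
    and high: "h < \<omega> (e, j)" "h < \<omega> (t, j)" "h < \<omega> (w, j)"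
      "h < \<omega> (e, j1)" "h < \<omega> (t, j1)" "h < \<omega> (e, j2)" "h < \<omega> (w, j2)"
  shows "has_dense_pattern n m h \<omega>"
proof (cases "j1 = j2")
  case True
  show ?thesis
    by (rule has_dense_patternI[where i = 0 and xs = "[e, t, w]" and js = "[j, j1]"])
      (use assms True in \<open>simp_all add: dense_patterns_def\<close>)
next
  case False
  show ?thesis
    by (rule has_dense_patternI[where i = 1 and xs = "[e, t, w]" and js = "[j, j1, j2]"])
      (use assms False in \<open>simp_all add: dense_patterns_def\<close>)
qed

lemma two_pairs_on_item_dense:
  assumes agents: "s < n" "t < n" "v < n" "w < n" "s \<noteq> t" "v \<noteq> w" "{s, t} \<noteq> {v, w}"
    and items: "j < m" "j1 < m" "j2 < m" "j1 \<noteq> j" "j2 \<noteq> j"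
    and high: "h < \<omega> (s, j)" "h < \<omega> (t, j)" "h < \<omega> (v, j)" "h < \<omega> (w, j)"
      "h < \<omega> (s, j1)" "h < \<omega> (t, j1)" "h < \<omega> (v, j2)" "h < \<omega> (w, j2)"
  shows "has_dense_pattern n m h \<omega>"
proof -
  consider "s = v" | "s = w" | "t = v" | "t = w" | "distinct [s, t, v, w]"
    using agents(5,6) by auto
  then show ?thesis
  proof cases
    case 1
    show ?thesis
      by (rule shared_agent_dense[OF _ _ _ _ items, where e = s and t = t and w = w])
        (use assms 1 in \<open>auto simp: doubleton_eq_iff\<close>)
  next
    case 2
    show ?thesis
      by (rule shared_agent_dense[OF _ _ _ _ items, where e = s and t = t and w = v])
        (use assms 2 in \<open>auto simp: doubleton_eq_iff\<close>)
  next
    case 3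
    show ?thesis
      by (rule shared_agent_dense[OF _ _ _ _ items, where e = t and t = s and w = w])
        (use assms 3 in \<open>auto simp: doubleton_eq_iff\<close>)
  next
    case 4
    show ?thesis
      by (rule shared_agent_dense[OF _ _ _ _ items, where e = t and t = s and w = v])
        (use assms 4 in \<open>auto simp: doubleton_eq_iff\<close>)
  next
    case 5
    show ?thesis
    proof (cases "j1 = j2")
      case True
      show ?thesis
        by (rule has_dense_patternI[where i = 4 and xs = "[s, t, v, w]" and js = "[j, j1]"])
          (use assms 5 True in \<open>simp_all add: dense_patterns_def\<close>)
    next
      case False
      show ?thesis
        by (rule has_dense_patternI[where i = 3 and xs = "[s, t, v, w]" and js = "[j, j1, j2]"])
          (use assms 5 False in \<open>simp_all add: dense_patterns_def\<close>)
    qed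
  qed
qed


section \<open>The degree bound for a fixed utility profile\<close>

definition has_large_overlap :: "nat \<Rightarrow> nat \<Rightarrow> real \<Rightarrow> nat \<Rightarrow> (nat \<times> nat \<Rightarrow> real) \<Rightarrow> bool" where
  "has_large_overlap n m h k \<omega> \<longleftrightarrow> (\<exists>x<n. \<exists>y<n. x \<noteq> y \<and> k \<le> card (high_overlap h m \<omega> x y))"

lemma has_large_overlap_iff:
  "has_large_overlap n m h k \<omega> \<longleftrightarrow>
     (\<exists>x<n. \<exists>y<n. \<exists>K. x \<noteq> y \<and> K \<subseteq> {..<m} \<and> card K = k \<and> (\<forall>c\<in>{x, y} \<times> K. h < \<omega> c))"
proof
  assume "has_large_overlap n m h k \<omega>"
  then obtain x y where xy: "x < n" "y < n" "x \<noteq> y" "k \<le> card (high_overlap h m \<omega> x y)"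
    by (auto simp: has_large_overlap_def)
  obtain K where K: "K \<subseteq> high_overlap h m \<omega> x y" "card K = k"
    using obtain_subset_with_card_n[OF xy(4)] by blast
  then have "K \<subseteq> {..<m}" "\<forall>c\<in>{x, y} \<times> K. h < \<omega> c"
    by (auto simp: high_overlap_def)
  with xy K(2) show "\<exists>x<n. \<exists>y<n. \<exists>K. x \<noteq> y \<and> K \<subseteq> {..<m} \<and> card K = k \<and> (\<forall>c\<in>{x, y} \<times> K. h < \<omega> c)"
    by blast
next
  assume "\<exists>x<n. \<exists>y<n. \<exists>K. x \<noteq> y \<and> K \<subseteq> {..<m} \<and> card K = k \<and> (\<forall>c\<in>{x, y} \<times> K. h < \<omega> c)"
  then obtain x y K where xyK: "x < n" "y < n" "x \<noteq> y" "card K = k" "K \<subseteq> {..<m}"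
    "\<forall>c\<in>{x, y} \<times> K. h < \<omega> c"
    by blast
  then have "K \<subseteq> high_overlap h m \<omega> x y"
    by (auto simp: high_overlap_def)
  then have "k \<le> card (high_overlap h m \<omega> x y)"
    using card_mono[OF finite_high_overlap] xyK(4) by blast
  with xyK(1-3) show "has_large_overlap n m h k \<omega>"
    by (auto simp: has_large_overlap_def)
qed

lemma removed_edges_empty:
  fixes \<omega> :: "nat \<times> nat \<Rightarrow> real"
  assumes le1: "\<forall>i<n. \<forall>j<m. \<omega> (i, j) \<le> 1" and \<alpha>: "0 < \<alpha>" "\<alpha> \<le> 1/16" and r: "4 \<le> r"
    and sparse: "\<not> has_large_overlap n m (1 - 2 * \<alpha>) (overlap_bound r) \<omega>"
  shows "removed_edges n m r (1 - \<alpha>) \<omega> = {}"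
proof -
  have no_edge: False if ij: "(i, j) \<in> removed_edges n m r (1 - \<alpha>) \<omega>" for i j
  proof -
    from ij have "i < n" by (simp add: E_ge_def)
    have "2 \<le> r" using r by simp
    then obtain p where "p < n" "p \<noteq> i" "4 \<le> r \<Longrightarrow> overlap_bound r \<le> card (high_overlap (1 - 2 * \<alpha>) m \<omega> i p)"
      using removed_edge_high_overlap[OF le1 \<alpha> _ ij] by blast
    with \<open>i < n\<close> r sparse show False by (auto simp: has_large_overlap_def)
  qed
  show ?thesis using no_edge by auto
qed

lemma agent_removed_degree_le_2:
  fixes \<omega> :: "nat \<times> nat \<Rightarrow> real"
  assumes le1: "\<forall>i<n. \<forall>j<m. \<omega> (i, j) \<le> 1" and \<alpha>: "0 < \<alpha>" "\<alpha> \<le> 1/16" and r: "2 \<le> r"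
    and sparse: "\<not> has_large_overlap n m (1 - 2 * \<alpha>) 3 \<omega>"
    and no_dense: "\<not> has_dense_pattern n m (1 - 2 * \<alpha>) \<omega>"
    and i: "i < n"
  shows "card {j. j < m \<and> (i, j) \<in> removed_edges n m r (1 - \<alpha>) \<omega>} \<le> 2"
proof (cases "{j. j < m \<and> (i, j) \<in> removed_edges n m r (1 - \<alpha>) \<omega>} = {}")
  case True
  then show ?thesis by (metis card.empty zero_le)
next
  case False
  let ?O = "high_overlap (1 - 2 * \<alpha>) m \<omega> i"
  obtain j0 where "(i, j0) \<in> removed_edges n m r (1 - \<alpha>) \<omega>" using False by auto
  then obtain p0 where p0: "p0 < n" "p0 \<noteq> i" "2 \<le> card (?O p0)"
    by (rule removed_edge_high_overlap[OF le1 \<alpha> r])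
  have "{j. j < m \<and> (i, j) \<in> removed_edges n m r (1 - \<alpha>) \<omega>} \<subseteq> ?O p0"
  proof
    fix j assume "j \<in> {j. j < m \<and> (i, j) \<in> removed_edges n m r (1 - \<alpha>) \<omega>}"
    then have "(i, j) \<in> removed_edges n m r (1 - \<alpha>) \<omega>" by simp
    then obtain p where p: "p < n" "p \<noteq> i" "j \<in> ?O p" "2 \<le> card (?O p)"
      by (rule removed_edge_high_overlap[OF le1 \<alpha> r])
    have "p = p0"
    proof (rule ccontr)
      assume "p \<noteq> p0"
      then have "has_dense_pattern n m (1 - 2 * \<alpha>) \<omega>"
        using two_high_overlaps_dense[OF i p0(1) p(1) _ p0(3) p(4)] p p0 by simp
      with no_dense show False ..
    qed
    with p show "j \<in> ?O p0" by simp
  qed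
  moreover have "card (?O p0) \<le> 2"
  proof -
    have "\<not> 3 \<le> card (?O p0)"
      using sparse i p0(1,2) unfolding has_large_overlap_def by blast
    then show ?thesis by simp
  qed
  ultimately show ?thesis
    by (meson card_mono finite_high_overlap le_trans)
qed

lemma item_removed_degree_le_2:
  fixes \<omega> :: "nat \<times> nat \<Rightarrow> real"
  assumes le1: "\<forall>i<n. \<forall>j<m. \<omega> (i, j) \<le> 1" and \<alpha>: "0 < \<alpha>" "\<alpha> \<le> 1/16" and r: "2 \<le> r"
    and no_dense: "\<not> has_dense_pattern n m (1 - 2 * \<alpha>) \<omega>"
    and j: "j < m"
  shows "card {i. i < n \<and> (i, j) \<in> removed_edges n m r (1 - \<alpha>) \<omega>} \<le> 2"
proof (rule ccontr)
  let ?h = "1 - 2 * \<alpha>" and ?R = "{i. i < n \<and> (i, j) \<in> removed_edges n m r (1 - \<alpha>) \<omega>}"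
  assume "\<not> card ?R \<le> 2"
  then have "3 \<le> card ?R" by simp
  then obtain x1 x2 x3 where xs: "x1 \<in> ?R" "x2 \<in> ?R" "x3 \<in> ?R" "distinct [x1, x2, x3]"
    by (rule card_ge_3_obtain)
  obtain p1 j1 where 1: "p1 < n" "p1 \<noteq> x1" "j1 < m" "j1 \<noteq> j" "?h < \<omega> (x1, j)" "?h < \<omega> (p1, j)"
      "?h < \<omega> (x1, j1)" "?h < \<omega> (p1, j1)"
    using xs(1) by (auto intro: removed_edge_partner[OF le1 \<alpha> r])
  obtain p2 j2 where 2: "p2 < n" "p2 \<noteq> x2" "j2 < m" "j2 \<noteq> j" "?h < \<omega> (x2, j)" "?h < \<omega> (p2, j)"
      "?h < \<omega> (x2, j2)" "?h < \<omega> (p2, j2)"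
    using xs(2) by (auto intro: removed_edge_partner[OF le1 \<alpha> r])
  obtain p3 j3 where 3: "p3 < n" "p3 \<noteq> x3" "j3 < m" "j3 \<noteq> j" "?h < \<omega> (x3, j)" "?h < \<omega> (p3, j)"
      "?h < \<omega> (x3, j3)" "?h < \<omega> (p3, j3)"
    using xs(3) by (auto intro: removed_edge_partner[OF le1 \<alpha> r])
  have "has_dense_pattern n m ?h \<omega>"
  proof (cases "{x1, p1} = {x2, p2}")
    case False
    show ?thesis
      by (rule two_pairs_on_item_dense[of x1 n p1 x2 p2 j m j1 j2]) (use xs 1 2 False j in auto)
  next
    case True
    then have "{x1, p1} \<noteq> {x3, p3}" using xs(4) by (auto simp: doubleton_eq_iff)
    show ?thesis
      by (rule two_pairs_on_item_dense[of x1 n p1 x3 p3 j m j1 j3])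
        (use xs 1 3 \<open>{x1, p1} \<noteq> {x3, p3}\<close> j in auto)
  qed
  with no_dense show False ..
qed

theorem max_degree_removed_edges_le_2:
  fixes \<omega> :: "nat \<times> nat \<Rightarrow> real"
  assumes le1: "\<forall>i<n. \<forall>j<m. \<omega> (i, j) \<le> 1" and \<alpha>: "0 < \<alpha>" "\<alpha> \<le> 1/16" and r: "2 \<le> r"
    and sparse: "\<not> has_large_overlap n m (1 - 2 * \<alpha>) (overlap_bound r) \<omega>"
    and no_dense: "r \<le> 3 \<Longrightarrow> \<not> has_dense_pattern n m (1 - 2 * \<alpha>) \<omega>"
  shows "max_degree_le n m (removed_edges n m r (1 - \<alpha>) \<omega>) 2"
proof (cases "r \<le> 3")
  case True
  then have "overlap_bound r = 3" by (simp add: overlap_bound_def)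
  then show ?thesis
    unfolding max_degree_le_def
    using agent_removed_degree_le_2[OF le1 \<alpha> r] item_removed_degree_le_2[OF le1 \<alpha> r] sparse no_dense[OF True]
    by simp
next
  case False
  then have empty: "removed_edges n m r (1 - \<alpha>) \<omega> = {}"
    using removed_edges_empty[OF le1 \<alpha> _ sparse] by simp
  show ?thesis unfolding max_degree_le_def empty by simp
qed


section \<open>Measurability of the degree event\<close>

text \<open>Sorting is not directly measurable, so the top-\<open>r\<close> sum is computed by a finite case
  distinction over the orderings of the items.\<close>

fun sum_top_first_sorted :: "nat \<Rightarrow> (nat \<Rightarrow> real) \<Rightarrow> nat list list \<Rightarrow> real" where
  "sum_top_first_sorted r f [] = 0"
| "sum_top_first_sorted r f (ys # yss) =
     (if sorted (map f ys) then sum_list (take r (rev (map f ys))) else sum_top_first_sorted r f yss)"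

lemma sum_top_first_sorted_eq:
  assumes "\<forall>ys\<in>set yss. mset ys = mset xs" "\<exists>ys\<in>set yss. sorted (map f ys)"
  shows "sum_top_first_sorted r f yss = sum_list (take r (rev (sort (map f xs))))"
  using assms
proof (induction yss)
  case (Cons ys yss)
  show ?case
  proof (cases "sorted (map f ys)")
    case True
    have "sort (map f xs) = map f ys"
      by (rule properties_for_sort) (use Cons.prems True in \<open>auto simp: mset_map\<close>)
    then show ?thesis using True by simp
  qed (use Cons in auto)
qed simp

lemma borel_measurable_sum_list_map:
  fixes F :: "nat \<Rightarrow> 'a \<Rightarrow> real"
  assumes "\<And>j. F j \<in> borel_measurable M"
  shows "(\<lambda>\<omega>. sum_list (map (\<lambda>j. F j \<omega>) zs)) \<in> borel_measurable M"
proof -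
  have "(\<lambda>\<omega>. sum_list (map (\<lambda>j. F j \<omega>) zs)) = (\<lambda>\<omega>. \<Sum>k<length zs. F (zs ! k) \<omega>)"
    by (simp add: sum_list_sum_nth atLeast0LessThan)
  also have "\<dots> \<in> borel_measurable M" using assms by measurable
  finally show ?thesis .
qed

lemma sets_sorted_map:
  fixes F :: "nat \<Rightarrow> 'a \<Rightarrow> real"
  assumes "\<And>j. F j \<in> borel_measurable M"
  shows "{\<omega> \<in> space M. sorted (map (\<lambda>j. F j \<omega>) ys)} \<in> sets M"
proof -
  have "{\<omega> \<in> space M. sorted (map (\<lambda>j. F j \<omega>) ys)} =
        {\<omega> \<in> space M. \<forall>i\<in>{i. Suc i < length ys}. F (ys ! i) \<omega> \<le> F (ys ! Suc i) \<omega>}"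
    by (auto simp: sorted_iff_nth_Suc)
  also have "\<dots> \<in> sets M" using assms by measurable
  finally show ?thesis .
qed

lemma borel_measurable_sum_top_first_sorted:
  assumes "\<And>j. F j \<in> borel_measurable M"
  shows "(\<lambda>\<omega>. sum_top_first_sorted r (\<lambda>j. F j \<omega>) yss) \<in> borel_measurable M"
proof (induction yss)
  case (Cons ys yss)
  have "(\<lambda>\<omega>. sum_list (take r (rev (map (\<lambda>j. F j \<omega>) ys)))) = (\<lambda>\<omega>. sum_list (map (\<lambda>j. F j \<omega>) (take r (rev ys))))"
    by (simp add: rev_map take_map)
  then have "(\<lambda>\<omega>. sum_list (take r (rev (map (\<lambda>j. F j \<omega>) ys)))) \<in> borel_measurable M"
    using borel_measurable_sum_list_map[OF assms] by simp
  then show ?case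
    unfolding sum_top_first_sorted.simps by (rule measurable_If[OF _ Cons.IH sets_sorted_map[OF assms]])
qed simp

lemma borel_measurable_sum_top:
  assumes F: "\<And>j. F j \<in> borel_measurable M" and S: "finite S"
  shows "(\<lambda>\<omega>. sum_top r (\<lambda>j. F j \<omega>) S) \<in> borel_measurable M"
proof -
  define xs where "xs = sorted_list_of_set S"
  have "{ys. mset ys = mset xs} \<subseteq> {ys. set ys \<subseteq> set xs \<and> length ys = length xs}"
    by (auto dest: mset_eq_setD mset_eq_length)
  then have "finite {ys. mset ys = mset xs}"
    by (rule finite_subset) (rule finite_lists_length_eq, simp)
  then obtain yss where yss: "set yss = {ys. mset ys = mset xs}"
    using finite_list by blast
  have "sum_top r (\<lambda>j. F j \<omega>) S = sum_top_first_sorted r (\<lambda>j. F j \<omega>) yss" for \<omega>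
  proof -
    have "sort_key (\<lambda>j. F j \<omega>) xs \<in> set yss" using yss by simp
    moreover have "sorted (map (\<lambda>j. F j \<omega>) (sort_key (\<lambda>j. F j \<omega>) xs))" by simp
    ultimately have "\<exists>ys\<in>set yss. sorted (map (\<lambda>j. F j \<omega>) ys)" by blast
    then show ?thesis
      unfolding sum_top_def xs_def[symmetric] using yss by (subst sum_top_first_sorted_eq) auto
  qed
  then show ?thesis
    using borel_measurable_sum_top_first_sorted[OF F] by simp
qed

lemma measurable_Collect_count_space_Pow:
  fixes m :: nat
  assumes S: "S \<subseteq> {..<m}" and Q: "\<And>j. j \<in> S \<Longrightarrow> {\<omega> \<in> space M. Q j \<omega>} \<in> sets M"
  shows "(\<lambda>\<omega>. {j\<in>S. Q j \<omega>}) \<in> measurable M (count_space (Pow {..<m}))"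
proof -
  have finS: "finite S" using S finite_subset by blast
  have "(\<lambda>\<omega>. {j\<in>S. Q j \<omega>}) -` {T} \<inter> space M \<in> sets M" for T
  proof (cases "T \<subseteq> S")
    case True
    have "(\<lambda>\<omega>. {j\<in>S. Q j \<omega>}) -` {T} \<inter> space M = {\<omega> \<in> space M. \<forall>j\<in>S. Q j \<omega> \<longleftrightarrow> j \<in> T}"
      using True by auto
    also have "\<dots> \<in> sets M"
      using Q finS by measurable
    finally show ?thesis .
  next
    case False
    then have "(\<lambda>\<omega>. {j\<in>S. Q j \<omega>}) -` {T} \<inter> space M = {}" by auto
    then show ?thesis by simp
  qed
  moreover have "(\<lambda>\<omega>. {j\<in>S. Q j \<omega>}) \<in> space M \<rightarrow> Pow {..<m}" using S by auto
  ultimately show ?thesis by (simp add: measurable_count_space_eq2)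
qed

lemma measurable_removal_step:
  fixes F :: "nat \<Rightarrow> 'a \<Rightarrow> real" and m :: nat
  assumes F: "\<And>j. F j \<in> borel_measurable M" and T: "T \<subseteq> {..<m}"
  shows "(\<lambda>\<omega>. removal_step r \<tau> (\<lambda>j. F j \<omega>) T) \<in> measurable M (count_space (Pow {..<m}))"
proof -
  have finT: "finite T" using T finite_subset by blast
  have eq: "removal_step r \<tau> (\<lambda>j. F j \<omega>) T = (if T \<noteq> {} \<and> real r * \<tau> < sum_top r (\<lambda>j. F j \<omega>) T
      then {j\<in>T. F j \<omega> \<noteq> Max ((\<lambda>j. F j \<omega>) ` T)} else T)" for \<omega>
    by (auto simp: removal_step_def)
  have top: "(\<lambda>\<omega>. sum_top r (\<lambda>j. F j \<omega>) T) \<in> borel_measurable M"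
    by (rule borel_measurable_sum_top[OF F finT])
  have max: "(\<lambda>\<omega>. Max ((\<lambda>j. F j \<omega>) ` T)) \<in> borel_measurable M"
    by (rule borel_measurable_Max[OF finT F])
  show ?thesis
    unfolding eq
  proof (rule measurable_If)
    show "(\<lambda>\<omega>. {j\<in>T. F j \<omega> \<noteq> Max ((\<lambda>j. F j \<omega>) ` T)}) \<in> measurable M (count_space (Pow {..<m}))"
      by (rule measurable_Collect_count_space_Pow[OF T]) (use F max in measurable)
    show "{\<omega> \<in> space M. T \<noteq> {} \<and> real r * \<tau> < sum_top r (\<lambda>j. F j \<omega>) T} \<in> sets M"
      using top by measurable
  qed (use T in simp)
qed

lemma measurable_removal_loop:
  fixes F :: "nat \<Rightarrow> 'a \<Rightarrow> real" and m :: nat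
  assumes F: "\<And>j. F j \<in> borel_measurable M" and g: "g \<in> measurable M (count_space (Pow {..<m}))"
  shows "(\<lambda>\<omega>. removal_loop r \<tau> (\<lambda>j. F j \<omega>) (g \<omega>)) \<in> measurable M (count_space (Pow {..<m}))"
proof -
  have iter: "(\<lambda>\<omega>. (removal_step r \<tau> (\<lambda>j. F j \<omega>) ^^ k) T) \<in> measurable M (count_space (Pow {..<m}))"
    if T: "T \<subseteq> {..<m}" for T k
  proof (induction k)
    case (Suc k)
    have "(\<lambda>\<omega>. (\<lambda>T' \<omega>. removal_step r \<tau> (\<lambda>j. F j \<omega>) T') ((removal_step r \<tau> (\<lambda>j. F j \<omega>) ^^ k) T) \<omega>)
        \<in> measurable M (count_space (Pow {..<m}))"
      by (rule measurable_compose_countable'[OF _ Suc.IH])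
        (auto intro: measurable_removal_step[OF F] countable_finite)
    then show ?case by simp
  qed (use T in simp)
  have "(\<lambda>\<omega>. (\<lambda>T \<omega>. removal_loop r \<tau> (\<lambda>j. F j \<omega>) T) (g \<omega>) \<omega>) \<in> measurable M (count_space (Pow {..<m}))"
    by (rule measurable_compose_countable'[OF _ g]) (auto simp: removal_loop_def intro: iter countable_finite)
  then show ?thesis by simp
qed

lemma measurable_M_star:
  fixes X :: "nat \<Rightarrow> nat \<Rightarrow> 'a \<Rightarrow> real" and m :: nat
  assumes X: "\<And>i j. X i j \<in> borel_measurable M"
  shows "(\<lambda>\<omega>. M_star n m r \<tau> (\<lambda>i j. X i j \<omega>) i) \<in> measurable M (count_space (Pow {..<m}))"
proof -
  have fold: "(\<lambda>\<omega>. foldl (\<lambda>S p. removal_loop r \<tau> (\<lambda>j. X p j \<omega>) S) (g \<omega>) ps) \<in> measurable M (count_space (Pow {..<m}))"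
    if "g \<in> measurable M (count_space (Pow {..<m}))" for g ps
    using that
  proof (induction ps arbitrary: g)
    case (Cons p ps)
    show ?case
      using Cons.IH[OF measurable_removal_loop[OF X Cons.prems]] by simp
  qed simp
  have "(\<lambda>\<omega>. {j\<in>{..<m}. \<tau> \<le> X i j \<omega>}) \<in> measurable M (count_space (Pow {..<m}))"
    by (rule measurable_Collect_count_space_Pow) (use X in measurable)
  moreover have "{j\<in>{..<m}. \<tau> \<le> X i j \<omega>} = {j. j < m \<and> \<tau> \<le> X i j \<omega>}" for \<omega>
    by auto
  ultimately have "(\<lambda>\<omega>. {j. j < m \<and> \<tau> \<le> X i j \<omega>}) \<in> measurable M (count_space (Pow {..<m}))"
    by simp
  then show ?thesis
    unfolding M_star_def by (rule fold)
qed

lemma measurable_removed_items: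
  fixes X :: "nat \<Rightarrow> nat \<Rightarrow> 'a \<Rightarrow> real"
  assumes X: "\<And>i j. X i j \<in> borel_measurable M"
  shows "(\<lambda>\<omega>. {j. j < m \<and> \<tau> \<le> X i j \<omega>} - M_star n m r \<tau> (\<lambda>i j. X i j \<omega>) i)
           \<in> measurable M (count_space (Pow {..<m}))"
proof (rule measurable_compose_countable'[where I = "Pow {..<m}"
      and f = "\<lambda>T \<omega>. T - M_star n m r \<tau> (\<lambda>i j. X i j \<omega>) i" and g = "\<lambda>\<omega>. {j. j < m \<and> \<tau> \<le> X i j \<omega>}"])
  show "(\<lambda>\<omega>. {j. j < m \<and> \<tau> \<le> X i j \<omega>}) \<in> measurable M (count_space (Pow {..<m}))"
    using measurable_Collect_count_space_Pow[of "{..<m}" m M "\<lambda>j \<omega>. \<tau> \<le> X i j \<omega>"] X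
    by (simp add: lessThan_def Collect_conj_eq[symmetric]) measurable
  fix T assume "T \<in> Pow {..<m}"
  then have "(\<lambda>S. T - S) \<in> measurable (count_space (Pow {..<m})) (count_space (Pow {..<m}))"
    by (auto simp: measurable_count_space_eq1)
  then show "(\<lambda>\<omega>. T - M_star n m r \<tau> (\<lambda>i j. X i j \<omega>) i) \<in> measurable M (count_space (Pow {..<m}))"
    by (rule measurable_compose[OF measurable_M_star[where X = X, OF X]])
qed (auto intro: countable_finite)

lemma measurable_restrict_count_space_Pow:
  fixes D :: "'i \<Rightarrow> 'a \<Rightarrow> 'b set"
  assumes I: "finite I" and A: "finite A" and D: "\<And>i. D i \<in> measurable M (count_space (Pow A))"
  shows "(\<lambda>\<omega>. \<lambda>i\<in>I. D i \<omega>) \<in> measurable M (count_space (PiE I (\<lambda>_. Pow A)))"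
proof -
  have "(\<lambda>\<omega>. \<lambda>i\<in>I. D i \<omega>) -` {d} \<inter> space M \<in> sets M" if d: "d \<in> PiE I (\<lambda>_. Pow A)" for d
  proof -
    have "(\<lambda>\<omega>. \<lambda>i\<in>I. D i \<omega>) -` {d} \<inter> space M = {\<omega> \<in> space M. \<forall>i\<in>I. D i \<omega> \<in> {d i} \<inter> Pow A}"
      using d by (auto simp: PiE_iff extensional_def fun_eq_iff)
    also have "\<dots> \<in> sets M"
    proof -
      have "Measurable.pred M (\<lambda>\<omega>. D i \<omega> \<in> {d i} \<inter> Pow A)" for i
        by (intro pred_sets2[OF _ D]) simp
      then show ?thesis using I by measurable
    qed
    finally show ?thesis .
  qed
  moreover have "(\<lambda>\<omega>. \<lambda>i\<in>I. D i \<omega>) \<in> space M \<rightarrow> PiE I (\<lambda>_. Pow A)"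
    using measurable_space[OF D] by auto
  ultimately show ?thesis
    using I A by (simp add: measurable_count_space_eq2 finite_PiE)
qed

lemma sets_max_degree_removed:
  fixes X :: "nat \<Rightarrow> nat \<Rightarrow> 'a \<Rightarrow> real"
  assumes X: "\<And>i j. X i j \<in> borel_measurable M"
  shows "{\<omega> \<in> space M. max_degree_le n m (E_ge n m \<tau> (\<lambda>i j. X i j \<omega>) - E_star n m r \<tau> (\<lambda>i j. X i j \<omega>)) k}
           \<in> sets M"
proof -
  define D where "D \<omega> = (\<lambda>i\<in>{..<n}. {j. j < m \<and> \<tau> \<le> X i j \<omega>} - M_star n m r \<tau> (\<lambda>i j. X i j \<omega>) i)" for \<omega>
  have D: "D \<in> measurable M (count_space (PiE {..<n} (\<lambda>_. Pow {..<m})))"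
    unfolding D_def by (intro measurable_restrict_count_space_Pow measurable_removed_items X) simp_all
  define good where "good d \<longleftrightarrow> (\<forall>i<n. card (d i) \<le> k) \<and> (\<forall>j<m. card {i. i < n \<and> j \<in> d i} \<le> k)"
    for d :: "nat \<Rightarrow> nat set"
  have "max_degree_le n m (E_ge n m \<tau> (\<lambda>i j. X i j \<omega>) - E_star n m r \<tau> (\<lambda>i j. X i j \<omega>)) k \<longleftrightarrow> good (D \<omega>)"
    for \<omega>
  proof -
    have "{j. j < m \<and> (i, j) \<in> E_ge n m \<tau> (\<lambda>i j. X i j \<omega>) - E_star n m r \<tau> (\<lambda>i j. X i j \<omega>)} = D \<omega> i"
      if "i < n" for i
      using that by (auto simp: D_def E_ge_def E_star_def)
    moreover have "{i. i < n \<and> (i, j) \<in> E_ge n m \<tau> (\<lambda>i j. X i j \<omega>) - E_star n m r \<tau> (\<lambda>i j. X i j \<omega>)}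
        = {i. i < n \<and> j \<in> D \<omega> i}" for j
      by (auto simp: D_def E_ge_def E_star_def)
    ultimately show ?thesis
      unfolding max_degree_le_def good_def by simp
  qed
  moreover have "{\<omega> \<in> space M. good (D \<omega>)} = D -` {d \<in> PiE {..<n} (\<lambda>_. Pow {..<m}). good d} \<inter> space M"
    using measurable_space[OF D] by auto
  moreover have "\<dots> \<in> sets M"
    by (rule measurable_sets[OF D]) simp
  ultimately show ?thesis by simp
qed

lemma borel_measurable_PiM_component:
  fixes U :: "real measure"
  assumes "sets U = sets borel"
  shows "(\<lambda>\<omega>. \<omega> c) \<in> borel_measurable (Pi\<^sub>M I (\<lambda>_. U))"
proof (cases "c \<in> I")
  case True
  then have "(\<lambda>\<omega>. \<omega> c) \<in> measurable (Pi\<^sub>M I (\<lambda>_. U)) U"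
    by (rule measurable_component_singleton)
  then show ?thesis
    using measurable_cong_sets[OF refl assms] by blast
next
  case False
  then have "\<omega> c = undefined" if "\<omega> \<in> space (Pi\<^sub>M I (\<lambda>_. U))" for \<omega>
    using that by (auto simp: space_PiM PiE_def extensional_def)
  moreover have "(\<lambda>_. undefined) \<in> borel_measurable (Pi\<^sub>M I (\<lambda>_. U))" by simp
  ultimately show ?thesis
    using measurable_cong[of "Pi\<^sub>M I (\<lambda>_. U)" "\<lambda>\<omega>. \<omega> c" "\<lambda>_. undefined" borel] by blast
qed


section \<open>Union bounds on the product space\<close>

lemma sets_PiM_all_in:
  assumes "C \<subseteq> I" "finite C" "A \<in> sets U"
  shows "{\<omega> \<in> space (Pi\<^sub>M I (\<lambda>_. U)). \<forall>c\<in>C. \<omega> c \<in> A} \<in> sets (Pi\<^sub>M I (\<lambda>_. U))"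
proof (cases "C = {}")
  case False
  have "{\<omega> \<in> space (Pi\<^sub>M I (\<lambda>_. U)). \<forall>c\<in>C. \<omega> c \<in> A} =
      (\<Inter>c\<in>C. {\<omega> \<in> space (Pi\<^sub>M I (\<lambda>_. U)). \<omega> c \<in> A})"
    using False by auto
  also have "\<dots> \<in> sets (Pi\<^sub>M I (\<lambda>_. U))"
    using assms False by (intro sets.finite_INT) (auto intro!: measurable_sets[OF measurable_component_singleton])
  finally show ?thesis .
qed simp

lemma prob_PiM_all_in:
  assumes U: "prob_space U" and "C \<subseteq> I" "finite C" "A \<in> sets U"
  shows "measure (Pi\<^sub>M I (\<lambda>_. U)) {\<omega> \<in> space (Pi\<^sub>M I (\<lambda>_. U)). \<forall>c\<in>C. \<omega> c \<in> A} = measure U A ^ card C"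
proof -
  interpret product_prob_space "\<lambda>_. U" I
    by (simp add: product_prob_space_def product_prob_space_axioms_def product_sigma_finite_def
        U prob_space_imp_sigma_finite)
  have "emeasure (Pi\<^sub>M I (\<lambda>_. U)) {\<omega> \<in> space (Pi\<^sub>M I (\<lambda>_. U)). \<forall>c\<in>C. \<omega> c \<in> A} = (\<Prod>c\<in>C. emeasure U A)"
    by (rule emeasure_PiM_Collect) (use assms in auto)
  also have "\<dots> = ennreal (measure U A ^ card C)"
    by (simp add: M.emeasure_eq_measure ennreal_power)
  finally show ?thesis
    by (simp add: P.emeasure_eq_measure)
qed

lemma measure_PiM_UN_all_in_le:
  fixes X :: "'x set" and C :: "'x \<Rightarrow> 'i set"
  assumes U: "prob_space U" and A: "A \<in> sets U" and X: "finite X" "card X \<le> N"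
    and C: "\<And>x. x \<in> X \<Longrightarrow> C x \<subseteq> I \<and> finite (C x) \<and> s \<le> card (C x)"
  shows "(\<Union>x\<in>X. {\<omega> \<in> space (Pi\<^sub>M I (\<lambda>_. U)). \<forall>c\<in>C x. \<omega> c \<in> A}) \<in> sets (Pi\<^sub>M I (\<lambda>_. U))"
    and "measure (Pi\<^sub>M I (\<lambda>_. U)) (\<Union>x\<in>X. {\<omega> \<in> space (Pi\<^sub>M I (\<lambda>_. U)). \<forall>c\<in>C x. \<omega> c \<in> A})
           \<le> real N * measure U A ^ s"
proof -
  let ?P = "Pi\<^sub>M I (\<lambda>_. U)"
  let ?E = "\<lambda>x. {\<omega> \<in> space ?P. \<forall>c\<in>C x. \<omega> c \<in> A}"
  have E: "?E x \<in> sets ?P" if "x \<in> X" for x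
    using C[OF that] A by (intro sets_PiM_all_in) auto
  then show "(\<Union>x\<in>X. ?E x) \<in> sets ?P" using X by auto
  interpret U: prob_space U by (rule U)
  have "measure ?P (\<Union>x\<in>X. ?E x) \<le> (\<Sum>x\<in>X. measure ?P (?E x))"
    by (rule measure_UNION_le[OF X(1) E])
  also have "\<dots> \<le> (\<Sum>x\<in>X. measure U A ^ s)"
  proof (rule sum_mono)
    fix x assume "x \<in> X"
    then have "measure ?P (?E x) = measure U A ^ card (C x)"
      using C A by (intro prob_PiM_all_in U) auto
    also have "\<dots> \<le> measure U A ^ s"
      using C[OF \<open>x \<in> X\<close>] by (simp add: power_decreasing)
    finally show "measure ?P (?E x) \<le> measure U A ^ s" .
  qed
  also have "\<dots> \<le> real N * measure U A ^ s"
    using X(2) by (simp add: mult_right_mono)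
  finally show "measure ?P (\<Union>x\<in>X. ?E x) \<le> real N * measure U A ^ s" .
qed

lemma large_overlap_event:
  fixes U :: "real measure" and n m :: nat
  assumes U: "prob_space U" "sets U = sets borel"
  defines "P \<equiv> Pi\<^sub>M ({..<n} \<times> {..<m}) (\<lambda>_. U)"
  shows "{\<omega> \<in> space P. has_large_overlap n m h k \<omega>} \<in> sets P"
    and "measure P {\<omega> \<in> space P. has_large_overlap n m h k \<omega>}
           \<le> real (n * n * (m choose k)) * measure U {h<..} ^ (2 * k)"
proof -
  define X where "X = {(x, y, K). x < n \<and> y < n \<and> x \<noteq> y \<and> K \<subseteq> {..<m} \<and> card K = k}"
  define C where "C = (\<lambda>(x :: nat, y, K). {x, y} \<times> (K :: nat set))"
  have X_sub: "X \<subseteq> {..<n} \<times> {..<n} \<times> {K. K \<subseteq> {..<m} \<and> card K = k}"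
    by (auto simp: X_def)
  have card_X: "card X \<le> n * n * (m choose k)"
    using card_mono[OF _ X_sub] by (simp add: card_cartesian_product n_subsets)
  have C: "C z \<subseteq> {..<n} \<times> {..<m} \<and> finite (C z) \<and> 2 * k \<le> card (C z)" if "z \<in> X" for z
    using that by (auto simp: X_def C_def card_cartesian_product dest: finite_subset)
  have event: "{\<omega> \<in> space P. has_large_overlap n m h k \<omega>} = (\<Union>z\<in>X. {\<omega> \<in> space P. \<forall>c\<in>C z. \<omega> c \<in> {h<..}})"
    unfolding has_large_overlap_iff X_def C_def by auto
  have fin: "finite X"
    by (rule finite_subset[OF X_sub]) auto
  have "{h<..} \<in> sets U" using U(2) by simp
  note bound = measure_PiM_UN_all_in_le[OF U(1) this fin card_X, where C = C, OF C]
  show "{\<omega> \<in> space P. has_large_overlap n m h k \<omega>} \<in> sets P"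
    unfolding event unfolding P_def by (rule bound(1))
  show "measure P {\<omega> \<in> space P. has_large_overlap n m h k \<omega>}
      \<le> real (n * n * (m choose k)) * measure U {h<..} ^ (2 * k)"
    unfolding event unfolding P_def by (rule bound(2))
qed

lemma card_pattern_cells:
  assumes "distinct xs" "distinct js" "distinct P" "\<forall>(k, l)\<in>set P. k < length xs \<and> l < length js"
  shows "card ((\<lambda>(k, l). (xs ! k, js ! l)) ` set P) = length P"
proof -
  have bounds: "k < length xs" "l < length js" if "(k, l) \<in> set P" for k l
    using assms(4) that by auto
  have "inj_on (\<lambda>(k, l). (xs ! k, js ! l)) (set P)"
    using assms(1,2) by (force simp: inj_on_def nth_eq_iff_index_eq dest: bounds)
  then show ?thesis
    using assms(3) by (simp add: card_image distinct_card)
qed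

lemma pattern_event:
  fixes U :: "real measure" and n m :: nat
  assumes U: "prob_space U" "sets U = sets borel"
    and P: "distinct P" "\<forall>(k, l)\<in>set P. k < a \<and> l < b"
  defines "Q \<equiv> Pi\<^sub>M ({..<n} \<times> {..<m}) (\<lambda>_. U)"
  shows "{\<omega> \<in> space Q. pattern_occurs n m h a b P \<omega>} \<in> sets Q"
    and "measure Q {\<omega> \<in> space Q. pattern_occurs n m h a b P \<omega>}
           \<le> real (n ^ a * m ^ b) * measure U {h<..} ^ length P"
proof -
  define X where "X = {(xs, js). set xs \<subseteq> {..<n} \<and> distinct xs \<and> length xs = a \<and>
                                set js \<subseteq> {..<m} \<and> distinct js \<and> length js = b}"
  define C where "C = (\<lambda>(xs, js). (\<lambda>(k, l). (xs ! k :: nat, js ! l :: nat)) ` set P)"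
  have X_sub: "X \<subseteq> {xs. set xs \<subseteq> {..<n} \<and> length xs = a} \<times> {js. set js \<subseteq> {..<m} \<and> length js = b}"
    by (auto simp: X_def)
  have card_X: "card X \<le> n ^ a * m ^ b"
    using card_mono[OF _ X_sub] by (simp add: card_cartesian_product card_lists_length_eq finite_lists_length_eq)
  have C: "C z \<subseteq> {..<n} \<times> {..<m} \<and> finite (C z) \<and> length P \<le> card (C z)" if zX: "z \<in> X" for z
  proof -
    obtain xs js where z: "z = (xs, js)" "set xs \<subseteq> {..<n}" "distinct xs" "length xs = a"
      "set js \<subseteq> {..<m}" "distinct js" "length js = b"
      using zX by (cases z) (auto simp: X_def)
    have "card (C z) = length P"
      unfolding C_def z(1) prod.case by (rule card_pattern_cells) (use z P in auto)
    moreover have "C z \<subseteq> {..<n} \<times> {..<m}"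
      using P(2) z by (auto simp: C_def dest!: nth_mem)
    ultimately show ?thesis by (simp add: C_def z(1))
  qed
  have event: "{\<omega> \<in> space Q. pattern_occurs n m h a b P \<omega>} = (\<Union>z\<in>X. {\<omega> \<in> space Q. \<forall>c\<in>C z. \<omega> c \<in> {h<..}})"
    unfolding pattern_occurs_def X_def C_def by (auto simp: split_def) blast
  have fin: "finite X"
    by (rule finite_subset[OF X_sub]) (simp add: finite_lists_length_eq)
  have "{h<..} \<in> sets U" using U(2) by simp
  note bound = measure_PiM_UN_all_in_le[OF U(1) this fin card_X, where C = C, OF C]
  show "{\<omega> \<in> space Q. pattern_occurs n m h a b P \<omega>} \<in> sets Q"
    unfolding event unfolding Q_def by (rule bound(1))
  show "measure Q {\<omega> \<in> space Q. pattern_occurs n m h a b P \<omega>}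
      \<le> real (n ^ a * m ^ b) * measure U {h<..} ^ length P"
    unfolding event unfolding Q_def by (rule bound(2))
qed

lemma dense_pattern_event:
  fixes U :: "real measure" and n m :: nat
  assumes U: "prob_space U" "sets U = sets borel"
  defines "P \<equiv> Pi\<^sub>M ({..<n} \<times> {..<m}) (\<lambda>_. U)"
  shows "{\<omega> \<in> space P. has_dense_pattern n m h \<omega>} \<in> sets P"
    and "measure P {\<omega> \<in> space P. has_dense_pattern n m h \<omega>}
           \<le> (\<Sum>(a, b, Q)\<in>set dense_patterns. real (n ^ a * m ^ b) * measure U {h<..} ^ length Q)"
proof -
  define E where "E = (\<lambda>(a, b, Q). {\<omega> \<in> space P. pattern_occurs n m h a b Q \<omega>})"
  have event: "{\<omega> \<in> space P. has_dense_pattern n m h \<omega>} = (\<Union>z\<in>set dense_patterns. E z)"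
    by (auto simp: has_dense_pattern_def E_def)
  have E: "E z \<in> sets P" "measure P (E z) \<le> (case z of (a, b, Q) \<Rightarrow> real (n ^ a * m ^ b) * measure U {h<..} ^ length Q)"
    if "z \<in> set dense_patterns" for z
  proof -
    obtain a b Q where z: "z = (a, b, Q)" by (cases z)
    have wf: "distinct Q" "\<forall>(k, l)\<in>set Q. k < a \<and> l < b"
      using dense_patterns_wf that unfolding z by auto
    show "E z \<in> sets P" "measure P (E z) \<le> (case z of (a, b, Q) \<Rightarrow> real (n ^ a * m ^ b) * measure U {h<..} ^ length Q)"
      unfolding E_def P_def z prod.case by (rule pattern_event[OF U wf])+
  qed
  show "{\<omega> \<in> space P. has_dense_pattern n m h \<omega>} \<in> sets P"
    unfolding event using E(1) by blast
  have "measure P (\<Union>z\<in>set dense_patterns. E z) \<le> (\<Sum>z\<in>set dense_patterns. measure P (E z))"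
    by (rule measure_UNION_le) (use E(1) in auto)
  also have "\<dots> \<le> (\<Sum>(a, b, Q)\<in>set dense_patterns. real (n ^ a * m ^ b) * measure U {h<..} ^ length Q)"
    by (rule sum_mono) (use E(2) in auto)
  finally show "measure P {\<omega> \<in> space P. has_dense_pattern n m h \<omega>}
      \<le> (\<Sum>(a, b, Q)\<in>set dense_patterns. real (n ^ a * m ^ b) * measure U {h<..} ^ length Q)"
    unfolding event .
qed

lemma out_of_range_event:
  fixes U :: "real measure" and I :: "'i set"
  assumes U: "prob_space U" "sets U = sets borel" "measure U {1<..} = 0" and I: "finite I"
  defines "P \<equiv> Pi\<^sub>M I (\<lambda>_. U)"
  shows "{\<omega> \<in> space P. \<exists>c\<in>I. 1 < \<omega> c} \<in> sets P" and "measure P {\<omega> \<in> space P. \<exists>c\<in>I. 1 < \<omega> c} = 0"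
proof -
  have event: "{\<omega> \<in> space P. \<exists>c\<in>I. 1 < \<omega> c} = (\<Union>c\<in>I. {\<omega> \<in> space P. \<forall>c'\<in>{c}. \<omega> c' \<in> {1<..}})"
    by auto
  have "{1<..} \<in> sets U" using U(2) by simp
  note bound = measure_PiM_UN_all_in_le[OF U(1) this I order.refl, where C = "\<lambda>c. {c}" and s = 1]
  show "{\<omega> \<in> space P. \<exists>c\<in>I. 1 < \<omega> c} \<in> sets P"
    unfolding event unfolding P_def by (rule bound(1)) simp
  have "measure P {\<omega> \<in> space P. \<exists>c\<in>I. 1 < \<omega> c} \<le> 0"
    unfolding event unfolding P_def using bound(2) U(3) by simp
  then show "measure P {\<omega> \<in> space P. \<exists>c\<in>I. 1 < \<omega> c} = 0"
    using measure_nonneg by (rule antisym)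
qed

lemma measure_gt_1_eq_0:
  fixes U :: "real measure"
  assumes "prob_space U" "sets U = sets borel" "measure U {0..1} = 1"
  shows "measure U {1<..} = 0"
proof -
  interpret prob_space U by fact
  have "{0..1} \<inter> {1<..} = ({} :: real set)" by auto
  then have "measure U {0..1} + measure U {1<..} = measure U ({0..1} \<union> {1<..})"
    using assms(2) by (intro finite_measure_Union[symmetric]) simp_all
  also have "\<dots> \<le> 1" by (rule prob_le_1)
  finally show ?thesis using assms(3) measure_nonneg[of U "{1<..}"] by linarith
qed


theorem max_degree_removed_le_2_prob_ge:
  fixes U :: "real measure" and n m r :: nat and \<alpha> :: real
  assumes U: "prob_space U" "sets U = sets borel" "measure U {1<..} = 0"
    and \<alpha>: "0 < \<alpha>" "\<alpha> \<le> 1/16" and r: "2 \<le> r"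
  defines "P \<equiv> Pi\<^sub>M ({..<n} \<times> {..<m}) (\<lambda>_. U)" and "\<rho> \<equiv> measure U {1 - 2 * \<alpha><..}"
  shows "1 - (real (n * n * (m choose overlap_bound r)) * \<rho> ^ (2 * overlap_bound r)
              + (if r \<le> 3 then (\<Sum>(a, b, Q)\<in>set dense_patterns. real (n ^ a * m ^ b) * \<rho> ^ length Q) else 0))
         \<le> measure P {\<omega> \<in> space P. max_degree_le n m (removed_edges n m r (1 - \<alpha>) \<omega>) 2}"
proof -
  interpret P: prob_space P
    unfolding P_def by (rule prob_space_PiM) (use U in auto)
  let ?h = "1 - 2 * \<alpha>"
  define Out where "Out = {\<omega> \<in> space P. \<exists>c\<in>{..<n} \<times> {..<m}. 1 < \<omega> c}"
  define Large where "Large = {\<omega> \<in> space P. has_large_overlap n m ?h (overlap_bound r) \<omega>}"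
  define Dense where "Dense = {\<omega> \<in> space P. r \<le> 3 \<and> has_dense_pattern n m ?h \<omega>}"
  define Good where "Good = {\<omega> \<in> space P. max_degree_le n m (removed_edges n m r (1 - \<alpha>) \<omega>) 2}"
  have Out: "Out \<in> sets P" "measure P Out = 0"
    unfolding Out_def P_def by (rule out_of_range_event[OF U]; simp)+
  have Large: "Large \<in> sets P"
    "measure P Large \<le> real (n * n * (m choose overlap_bound r)) * \<rho> ^ (2 * overlap_bound r)"
    unfolding Large_def P_def \<rho>_def by (rule large_overlap_event[OF U(1,2)])+
  note dense = dense_pattern_event[OF U(1,2), of n m ?h, folded P_def \<rho>_def]
  have Dense: "Dense \<in> sets P" "measure P Dense
      \<le> (if r \<le> 3 then (\<Sum>(a, b, Q)\<in>set dense_patterns. real (n ^ a * m ^ b) * \<rho> ^ length Q) else 0)"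
    using dense by (auto simp: Dense_def)
  have Good: "Good \<in> sets P"
    unfolding Good_def unfolding P_def by (rule sets_max_degree_removed) (rule borel_measurable_PiM_component[OF U(2)])
  have "space P - (Out \<union> Large \<union> Dense) \<subseteq> Good"
  proof
    fix \<omega> assume \<omega>: "\<omega> \<in> space P - (Out \<union> Large \<union> Dense)"
    then have "\<forall>i<n. \<forall>j<m. \<omega> (i, j) \<le> 1"
      by (auto simp: Out_def not_less)
    with \<omega> show "\<omega> \<in> Good"
      using max_degree_removed_edges_le_2[OF _ \<alpha> r] by (auto simp: Large_def Dense_def Good_def)
  qed
  then have "measure P (space P - (Out \<union> Large \<union> Dense)) \<le> measure P Good"
    by (rule P.finite_measure_mono) (rule Good)
  moreover have "measure P (Out \<union> Large \<union> Dense) \<le> measure P Out + measure P Large + measure P Dense"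
    using measure_Un_le[of "Out \<union> Large" P Dense] measure_Un_le[of Out P Large] Out(1) Large(1) Dense(1)
    by simp
  ultimately show ?thesis
    using P.prob_compl[of "Out \<union> Large \<union> Dense"] Out Large Dense
    unfolding Good_def by simp
qed

section \<open>Asymptotics\<close>

lemma pow_div_fact_le_exp:
  fixes x :: real
  assumes "0 \<le> x"
  shows "x ^ k / fact k \<le> exp x"
proof -
  have "(\<Sum>i\<in>{k}. x ^ i /\<^sub>R fact i) \<le> (\<Sum>i. x ^ i /\<^sub>R fact i)"
    using assms by (intro sum_le_suminf[OF summable_exp_generic]) auto
  then show ?thesis
    by (simp add: exp_def divide_inverse_commute)
qed

lemma binomial_le_pow_div_fact: "real (m choose k) \<le> real m ^ k / fact k"
proof (cases "k \<le> m")
  case True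
  have "fact m = (fact k * (m choose k)) * fact (m - k)"
    using binomial_fact_lemma[OF True] by (simp only: mult.commute mult.left_commute)
  then have "fact k * (m choose k) = fact m div fact (m - k)"
    by simp
  also have "\<dots> \<le> m ^ k"
    by (rule fact_div_fact_le_pow[OF True])
  finally have "real (fact k * (m choose k)) \<le> real (m ^ k)"
    by (simp only: of_nat_le_iff)
  then show ?thesis
    by (simp add: field_simps)
qed (simp add: binomial_eq_0)

lemma binomial_le_exp_pow:
  assumes "0 < k"
  shows "real (m choose k) \<le> (exp 1 * real m / real k) ^ k"
proof -
  have "real (m choose k) \<le> (real m / real k) ^ k * (real k ^ k / fact k)"
    using binomial_le_pow_div_fact[of m k] assms by (simp add: power_divide)
  also have "\<dots> \<le> (real m / real k) ^ k * exp 1 ^ k"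
    using pow_div_fact_le_exp[of "real k" k] exp_of_nat_mult[of k "1::real"] by (intro mult_left_mono) simp_all
  also have "\<dots> = (real m / real k * exp 1) ^ k"
    by (rule power_mult_distrib[symmetric])
  also have "\<dots> = (exp 1 * real m / real k) ^ k"
    by (simp add: mult.commute)
  finally show ?thesis .
qed

lemma large_overlap_term_le:
  fixes \<rho> B :: real
  assumes n: "1 \<le> n" and m: "real m \<le> 4 * real k * real n" and k: "3 \<le> k"
    and \<rho>: "0 \<le> \<rho>" "\<rho> \<le> B / real n" and B: "0 \<le> B" and small: "4 * exp 1 * B\<^sup>2 \<le> real n"
  shows "real (n * n * (m choose k)) * \<rho> ^ (2 * k) \<le> 64 * exp 3 * B ^ 6 / real n"
proof -
  define x where "x = 4 * exp 1 * B\<^sup>2 / real n"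
  have x: "0 \<le> x" "x \<le> 1" using n small by (simp_all add: x_def)
  have "real (m choose k) * \<rho> ^ (2 * k) \<le> (exp 1 * real m / real k) ^ k * (B / real n) ^ (2 * k)"
    using binomial_le_exp_pow[of k m] k \<rho> by (intro mult_mono power_mono) auto
  also have "\<dots> \<le> (4 * exp 1 * real n) ^ k * (B / real n) ^ (2 * k)"
    using m k B n by (intro mult_right_mono power_mono) (auto simp: field_simps)
  also have "\<dots> = x ^ k"
    using n by (simp add: x_def power_mult power_mult_distrib power2_eq_square field_simps)
  also have "\<dots> \<le> x ^ 3"
    by (rule power_decreasing[OF k x])
  finally have "real (n * n) * (real (m choose k) * \<rho> ^ (2 * k)) \<le> real (n * n) * x ^ 3"
    by (rule mult_left_mono) simp
  also have "\<dots> = 64 * exp 3 * B ^ 6 / real n"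
    using n exp_of_nat_mult[of 3 "1::real"] by (simp add: x_def power_mult_distrib power3_eq_cube field_simps)
  finally show ?thesis by (simp add: mult.assoc)
qed

lemma pattern_term_le:
  fixes \<rho> B :: real
  assumes n: "1 \<le> n" and m: "m \<le> 3 * n" and \<rho>: "0 \<le> \<rho>" "\<rho> \<le> B / real n" and B: "0 \<le> B"
    and s: "a + b < s" "s \<le> 8"
  shows "real (n ^ a * m ^ b) * \<rho> ^ s \<le> 3 ^ b * (1 + B) ^ 8 / real n"
proof -
  have "real m \<le> 3 * real n" using m by linarith
  then have "real (n ^ a * m ^ b) \<le> real n ^ a * (3 * real n) ^ b"
    unfolding of_nat_mult of_nat_power by (intro mult_left_mono power_mono) auto
  then have "real (n ^ a * m ^ b) * \<rho> ^ s \<le> real n ^ a * (3 * real n) ^ b * (B / real n) ^ s"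
    using \<rho> by (intro mult_mono power_mono) auto
  also have "\<dots> = 3 ^ b * B ^ s / real n ^ (s - (a + b))"
    using n s by (simp add: power_mult_distrib power_divide power_diff flip: power_add)
  also have "\<dots> \<le> 3 ^ b * (1 + B) ^ 8 / real n"
  proof (intro frac_le mult_left_mono)
    have "B ^ s \<le> (1 + B) ^ s" using B by (intro power_mono) auto
    also have "\<dots> \<le> (1 + B) ^ 8" using B s by (intro power_increasing) auto
    finally show "B ^ s \<le> (1 + B) ^ 8" .
    show "real n \<le> real n ^ (s - (a + b))"
      using n s by (metis One_nat_def le_add_diff_inverse2 less_imp_le_nat of_nat_1 of_nat_le_iff
          power_increasing power_one_right zero_less_diff Suc_leI)
  qed (use n B in auto)
  finally show ?thesis .
qed

lemma dense_patterns_sum_le: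
  fixes \<rho> B :: real
  assumes n: "1 \<le> n" and m: "m \<le> 3 * n" and \<rho>: "0 \<le> \<rho>" "\<rho> \<le> B / real n" and B: "0 \<le> B"
  shows "(\<Sum>(a, b, Q)\<in>set dense_patterns. real (n ^ a * m ^ b) * \<rho> ^ length Q) \<le> 405 * (1 + B) ^ 8 / real n"
proof -
  have "real (n ^ a * m ^ b) * \<rho> ^ length Q \<le> 81 * (1 + B) ^ 8 / real n"
    if "(a, b, Q) \<in> set dense_patterns" for a b Q
  proof -
    have wf: "a + b < length Q" "length Q \<le> 8" "b \<le> 4"
      using dense_patterns_wf[OF that] by auto
    have "real (n ^ a * m ^ b) * \<rho> ^ length Q \<le> 3 ^ b * (1 + B) ^ 8 / real n"
      by (rule pattern_term_le[OF n m \<rho> B wf(1,2)])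
    also have "\<dots> \<le> 3 ^ 4 * (1 + B) ^ 8 / real n"
      using wf(3) B by (intro divide_right_mono mult_right_mono power_increasing) auto
    finally show ?thesis by simp
  qed
  then have "(\<Sum>(a, b, Q)\<in>set dense_patterns. real (n ^ a * m ^ b) * \<rho> ^ length Q)
      \<le> real (card (set dense_patterns)) * (81 * (1 + B) ^ 8 / real n)"
    by (intro sum_bounded_above) auto
  also have "\<dots> \<le> 5 * (81 * (1 + B) ^ 8 / real n)"
    using card_length[of dense_patterns] B by (intro mult_right_mono) (auto simp: dense_patterns_def)
  finally show ?thesis by simp
qed

lemma bad_events_le:
  fixes \<rho> B :: real
  assumes n: "1 \<le> n" and r: "2 \<le> r" and \<rho>: "0 \<le> \<rho>" "\<rho> \<le> B / real n" and B: "0 \<le> B"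
    and small: "4 * exp 1 * B\<^sup>2 \<le> real n"
  shows "real (n * n * ((r * n) choose overlap_bound r)) * \<rho> ^ (2 * overlap_bound r)
           + (if r \<le> 3 then (\<Sum>(a, b, Q)\<in>set dense_patterns. real (n ^ a * (r * n) ^ b) * \<rho> ^ length Q) else 0)
         \<le> (64 * exp 3 + 405) * (1 + B) ^ 8 / real n"
proof -
  have k: "3 \<le> overlap_bound r" "r \<le> 4 * overlap_bound r"
    by (simp_all add: overlap_bound_def)
  then have "real (r * n) \<le> 4 * real (overlap_bound r) * real n"
    by (metis mult.assoc mult_le_mono1 of_nat_le_iff of_nat_mult of_nat_numeral)
  then have "real (n * n * ((r * n) choose overlap_bound r)) * \<rho> ^ (2 * overlap_bound r)
      \<le> 64 * exp 3 * B ^ 6 / real n"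
    by (rule large_overlap_term_le[OF n _ k(1) \<rho> B small])
  also have "\<dots> \<le> 64 * exp 3 * (1 + B) ^ 8 / real n"
  proof -
    have "B ^ 6 \<le> (1 + B) ^ 6" using B by (intro power_mono) auto
    also have "\<dots> \<le> (1 + B) ^ 8" using B by (intro power_increasing) auto
    finally show ?thesis using n by (intro divide_right_mono mult_left_mono) auto
  qed
  moreover have "(if r \<le> 3 then (\<Sum>(a, b, Q)\<in>set dense_patterns. real (n ^ a * (r * n) ^ b) * \<rho> ^ length Q) else 0)
      \<le> 405 * (1 + B) ^ 8 / real n"
    using dense_patterns_sum_le[OF n _ \<rho> B, of "r * n"] B by simp
  ultimately show ?thesis
    by (simp add: distrib_right add_divide_distrib)
qed

lemma threshold_gap_bounds:
  fixes U :: "real measure" and \<theta>l \<theta>u q L :: real and n :: nat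
  assumes above: "poly_bounded_above U \<theta>u q" and pos: "0 < \<theta>l" "0 < \<theta>u" "0 < q"
    and n: "0 < n" and L: "0 < L" and small: "64 * L \<le> (1/16) powr q * \<theta>l * real n"
  defines "\<alpha> \<equiv> (64 * L / (\<theta>l * real n)) powr (1 / q)"
  shows "0 < \<alpha>" and "\<alpha> \<le> 1/16" and "measure U {1 - 2 * \<alpha><..} \<le> \<theta>u * 2 powr q * 64 / \<theta>l * L / real n"
proof -
  have base: "0 < 64 * L / (\<theta>l * real n)" "64 * L / (\<theta>l * real n) \<le> (1/16) powr q"
    using pos n L small by (simp_all add: field_simps)
  show "0 < \<alpha>" using pos n L by (simp add: \<alpha>_def)
  have "\<alpha> \<le> ((1/16) powr q) powr (1/q)"
    unfolding \<alpha>_def using base pos by (intro powr_mono2) auto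
  then show "\<alpha> \<le> 1/16" using pos by (simp add: powr_powr)
  have "\<alpha> powr q = 64 * L / (\<theta>l * real n)"
    unfolding \<alpha>_def using base pos L by (simp add: powr_powr)
  then have "\<theta>u * (2 * \<alpha>) powr q = \<theta>u * 2 powr q * 64 / \<theta>l * L / real n"
    using \<open>0 < \<alpha>\<close> by (simp add: powr_mult)
  moreover have "measure U {1 - 2 * \<alpha><..} \<le> \<theta>u * (2 * \<alpha>) powr q"
    using above \<open>0 < \<alpha>\<close> \<open>\<alpha> \<le> 1/16\<close> unfolding poly_bounded_above_def by auto
  ultimately show "measure U {1 - 2 * \<alpha><..} \<le> \<theta>u * 2 powr q * 64 / \<theta>l * L / real n"
    by simp
qed

lemma polylog_pow_div_tendsto_0:
  assumes "k \<le> 8"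
  shows "(\<lambda>n::nat. (1 + real n powr 0.1 + ln (real n)) ^ k / real n) \<longlonglongrightarrow> 0"
proof (rule tendsto_sandwich[where f = "\<lambda>_. 0" and h = "\<lambda>n. (1 + real n powr 0.1 + ln (real n)) ^ 8 / real n"])
  have mono: "(1 + real n powr 0.1 + ln (real n)) ^ k \<le> (1 + real n powr 0.1 + ln (real n)) ^ 8"
    if "1 \<le> n" for n
    using that assms by (intro power_increasing) auto
  show "\<forall>\<^sub>F n in sequentially. (1 + real n powr 0.1 + ln (real n)) ^ k / real n
      \<le> (1 + real n powr 0.1 + ln (real n)) ^ 8 / real n"
    using eventually_ge_at_top[of "1::nat"] by eventually_elim (use mono in \<open>simp add: divide_right_mono\<close>)
  show "\<forall>\<^sub>F n in sequentially. 0 \<le> (1 + real n powr 0.1 + ln (real n)) ^ k / real n"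
    using eventually_ge_at_top[of "1::nat"] by eventually_elim simp
  show "(\<lambda>n::nat. (1 + real n powr 0.1 + ln (real n)) ^ 8 / real n) \<longlonglongrightarrow> 0"
    by real_asymp
qed simp

lemma eventually_polylog_pow_le:
  assumes "0 < c" "k \<le> 8"
  shows "\<forall>\<^sub>F n in sequentially. c * (1 + real n powr 0.1 + ln (real n)) ^ k \<le> real n"
proof -
  have "\<forall>\<^sub>F n in sequentially. (1 + real n powr 0.1 + ln (real n)) ^ k / real n < 1 / c"
    by (rule order_tendstoD(2)[OF polylog_pow_div_tendsto_0[OF assms(2)]]) (use assms in simp)
  then show ?thesis
    using eventually_ge_at_top[of "1::nat"]
  proof eventually_elim
    case (elim n)
    then show ?case using assms(1) by (simp add: field_simps)
  qed
qed

lemma max_degree_removed_le_2_prob_ge_at_threshold: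
  fixes U :: "real measure" and \<theta>l \<theta>u q :: real and r n :: nat
  defines "K \<equiv> \<theta>u * 2 powr q * 64 / \<theta>l" and "W \<equiv> 1 + real n powr 0.1 + ln (real n)"
  assumes U: "prob_space U" "sets U = sets borel" "measure U {1<..} = 0"
    and above: "poly_bounded_above U \<theta>u q" and pos: "0 < \<theta>l" "0 < \<theta>u" "0 < q"
    and r: "2 \<le> r" "ln (real r) \<le> real n powr 0.1" and n: "1 \<le> n"
    and small: "64 / ((1/16) powr q * \<theta>l) * W \<le> real n" "4 * exp 1 * K\<^sup>2 * W\<^sup>2 \<le> real n"
  defines "\<tau> \<equiv> 1 - (64 * ln (real (r * n)) / (\<theta>l * real n)) powr (1 / q)"
    and "P \<equiv> Pi\<^sub>M ({..<n} \<times> {..<r * n}) (\<lambda>_. U)"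
  shows "1 - (64 * exp 3 + 405) * ((1 + K) * W) ^ 8 / real n
           \<le> measure P {\<omega> \<in> space P. max_degree_le n (r * n) (removed_edges n (r * n) r \<tau> \<omega>) 2}"
proof -
  define L where "L = ln (real (r * n))"
  define \<alpha> where "\<alpha> = (64 * L / (\<theta>l * real n)) powr (1 / q)"
  have "0 < ln (real r)" "0 \<le> ln (real n)" "L = ln (real r) + ln (real n)"
    using r n by (simp_all add: L_def ln_mult)
  then have L: "0 < L" "L \<le> W"
    using r(2) unfolding W_def by linarith+
  have K: "0 \<le> K" using pos by (simp add: K_def)
  have n_pos: "0 < n" using n by simp
  have "64 * L \<le> (1/16) powr q * \<theta>l * real n"
    using small(1) L(2) pos by (simp add: field_simps)
  note gap = threshold_gap_bounds[OF above pos _ L(1) this, folded \<alpha>_def K_def, OF n_pos]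
  have "4 * exp 1 * (K * L)\<^sup>2 \<le> 4 * exp 1 * (K * W)\<^sup>2"
    using K L by (intro mult_left_mono power_mono) auto
  also have "\<dots> \<le> real n"
    using small(2) by (simp add: power_mult_distrib mult.assoc)
  finally have bad: "real (n * n * ((r * n) choose overlap_bound r)) * measure U {1 - 2 * \<alpha><..} ^ (2 * overlap_bound r)
      + (if r \<le> 3 then (\<Sum>(a, b, Q)\<in>set dense_patterns. real (n ^ a * (r * n) ^ b) * measure U {1 - 2 * \<alpha><..} ^ length Q) else 0)
      \<le> (64 * exp 3 + 405) * (1 + K * L) ^ 8 / real n"
    using K L n by (intro bad_events_le[OF n r(1) measure_nonneg gap(3)]) auto
  have "K * L \<le> K * W" "1 \<le> W"
    using K L n by (simp_all add: mult_left_mono W_def)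
  then have "(1 + K * L) ^ 8 \<le> ((1 + K) * W) ^ 8"
    using K L by (intro power_mono) (simp_all add: algebra_simps)
  then have "(64 * exp 3 + 405) * (1 + K * L) ^ 8 / real n \<le> (64 * exp 3 + 405) * ((1 + K) * W) ^ 8 / real n"
    by (intro divide_right_mono mult_left_mono) auto
  moreover have "\<tau> = 1 - \<alpha>"
    by (simp add: \<tau>_def \<alpha>_def L_def)
  ultimately show ?thesis
    using max_degree_removed_le_2_prob_ge[OF U gap(1,2) r(1), of n "r * n", folded P_def] bad by simp
qed

lemma eventually_max_degree_removed_le_2_prob_ge:
  fixes U :: "real measure" and \<theta>l \<theta>u q :: real and r :: "nat \<Rightarrow> nat"
  defines "K \<equiv> \<theta>u * 2 powr q * 64 / \<theta>l"
  assumes U: "prob_space U" "sets U = sets borel" "measure U {0..1} = 1"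
    and above: "poly_bounded_above U \<theta>u q" and pos: "0 < \<theta>l" "0 < \<theta>u" "0 < q"
    and r_bounds: "\<forall>\<^sub>F n in sequentially. 2 \<le> r n \<and> real (r n) \<le> exp (real n powr 0.1)"
  shows "\<forall>\<^sub>F n in sequentially.
           1 - (64 * exp 3 + 405) * (1 + K) ^ 8 * ((1 + real n powr 0.1 + ln (real n)) ^ 8 / real n)
           \<le> (let m = r n * n;
                  \<tau> = 1 - (64 * ln (real m) / (\<theta>l * real n)) powr (1 / q);
                  P = Pi\<^sub>M ({..<n} \<times> {..<m}) (\<lambda>_. U)
              in measure P {\<omega> \<in> space P. max_degree_le n m (removed_edges n m (r n) \<tau> \<omega>) 2})"
proof -
  have "0 < K" using pos by (simp add: K_def)
  have small: "\<forall>\<^sub>F n in sequentially. 64 / ((1/16) powr q * \<theta>l) * (1 + real n powr 0.1 + ln (real n)) ^ 1 \<le> real n"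
    "\<forall>\<^sub>F n in sequentially. 4 * exp 1 * K\<^sup>2 * (1 + real n powr 0.1 + ln (real n)) ^ 2 \<le> real n"
    by (rule eventually_polylog_pow_le; use pos \<open>0 < K\<close> in simp)+
  show ?thesis
    using r_bounds eventually_ge_at_top[of "1::nat"] small
  proof eventually_elim
    case (elim n)
    have "ln (real (r n)) \<le> ln (exp (real n powr 0.1))"
      using elim(1) by (subst ln_le_cancel_iff) auto
    then have "ln (real (r n)) \<le> real n powr 0.1" by simp
    then show ?case
      using max_degree_removed_le_2_prob_ge_at_threshold[OF U(1,2) measure_gt_1_eq_0[OF U] above pos, of "r n" n]
        elim by (simp add: K_def Let_def power_mult_distrib)
  qed
qed

theorem lemma2:
  fixes U :: "real measure" and \<theta>l \<theta>u q :: real and r :: "nat \<Rightarrow> nat"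
  assumes U_prob: "prob_space U" and U_borel: "sets U = sets borel"
    and U_supp: "measure U {0..1} = 1"
    and below: "poly_bounded_below U \<theta>l q" and above: "poly_bounded_above U \<theta>u q"
    and pos: "\<theta>l > 0" "\<theta>u > 0" "q > 0"
    and r_bounds: "eventually (\<lambda>n. 2 \<le> r n \<and> real (r n) \<le> exp (real n powr 0.1)) sequentially"
  shows "(\<lambda>n. let m = r n * n;
                 \<tau> = 1 - (64 * ln (real m) / (\<theta>l * real n)) powr (1 / q);
                 P = Pi\<^sub>M ({..<n} \<times> {..<m}) (\<lambda>_. U)
             in measure P {\<omega> \<in> space P.
                  max_degree_le n m
                    (E_ge n m \<tau> (\<lambda>i j. \<omega> (i, j)) - E_star n m (r n) \<tau> (\<lambda>i j. \<omega> (i, j))) 2})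
         \<longlonglongrightarrow> 1"
proof -
  define K where "K = \<theta>u * 2 powr q * 64 / \<theta>l"
  have "(\<lambda>n. 1 - (64 * exp 3 + 405) * (1 + K) ^ 8 * ((1 + real n powr 0.1 + ln (real n)) ^ 8 / real n))
      \<longlonglongrightarrow> 1 - 0"
    by (intro tendsto_diff tendsto_const tendsto_mult_right_zero polylog_pow_div_tendsto_0) simp
  then have lower_lim: "(\<lambda>n. 1 - (64 * exp 3 + 405) * (1 + K) ^ 8 * ((1 + real n powr 0.1 + ln (real n)) ^ 8 / real n))
      \<longlonglongrightarrow> 1"
    by simp
  show ?thesis
    by (rule tendsto_sandwich[OF eventually_max_degree_removed_le_2_prob_ge[OF U_prob U_borel U_supp above pos r_bounds,
          folded K_def] _ lower_lim tendsto_const], intro always_eventually allI)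
      (simp add: Let_def U_prob prob_space.prob_le_1 prob_space_PiM)
qed

end
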